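(* Assume A1, A2 and R2. Then $\sup_{\theta\in\Theta}\sup_{x\in\mathsf X}|H(x,\theta)|\le\sqrt2\sup_{(0,1)}\rho$. Moreover, for every $\theta\in\Theta$ there exists a unique function $\widehat H_\theta:\mathsf X\to\mathbb R^d$ solving the Poisson equation $$\widehat H_\theta-P^\rho_\theta\widehat H_\theta=H(\cdot,\theta)-h(\theta),\qquad \int\widehat H_\theta\,\pi^\rho_\theta\,d\lambda=0;$$ it satisfies $\sup_{\theta\in\Theta,x\in\mathsf X}|\widehat H_\theta(x)|<\infty$, and there is a constant $C$ such that for all $\theta,\theta'\in\Theta$, $$\sup_{\mathsf X}\Big\{|\widehat H_\theta-\widehat H_{\theta'}|+|P^\rho_\theta\widehat H_\theta-P^\rho_{\theta'}\widehat H_{\theta'}|\Big\}\le C\Big(|\theta-\theta'|+\sum_{i=1}^d\Big|1-\frac{\rho(\theta'(i))}{\rho(\theta(i))}\Big|\Big).$$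
   Context: Let $\mathsf X\subset\mathbb R^D$ be measurable, $\lambda$ a nonnegative reference measure, $\pi$ a probability density on $\mathsf X$ w.r.t. $\lambda$. $\mathsf X=\bigcup_{i=1}^d\mathsf X_i$ is a partition into disjoint measurable strata, $I(x)=i$ iff $x\in\mathsf X_i$, $\theta_\star(i)=\int_{\mathsf X_i}\pi\,d\lambda$, $\Theta=\{\theta\in(0,1)^d:\sum_i\theta(i)=1\}$. For measurable $\rho:(0,1)\to(0,\infty)$ and $\theta\in\Theta$, $\pi^\rho_\theta(x)=(Z^\rho_\theta)^{-1}\sum_{i}\frac{\pi(x)}{\rho(\theta(i))}\mathbf 1_{\mathsf X_i}(x)$, $Z^\rho_\theta=\sum_i\frac{\theta_\star(i)}{\rho(\theta(i))}$. A1: $\sup_{\mathsf X}\pi<\infty$ and $\min_i\theta_\star(i)>0$. A2: for every $\theta\in\Theta$, $P^\rho_\theta$ is the Metropolis–Hastings kernel with symmetric proposal density $q(x,y)$ w.r.t. $\lambda$, $\inf_{\mathsf X^2}q>0$, and invariant distribution $\pi^\rho_\theta\,d\lambda$. R2: $\sup_{(0,1)}\rho<\infty$. $H:\mathsf X\times\Theta\to\mathbb R^d$ has components $H_i(x,\theta)=\rho(\theta(i))\mathbf 1_{\mathsf X_i}(x)-\theta(i)\rho(\theta(I(x)))$, and $h(\theta)=\int_{\mathsf X}H(x,\theta)\pi^\rho_\theta(x)\lambda(dx)=(\theta_\star-\theta)/Z^\rho_\theta$. $|\cdot|$ denotes the Euclidean norm; kernels act componentwise on vector-valued functions. *)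

theory Defs
  imports "HOL-Analysis.Analysis" "HOL-Probability.Probability"
begin

text \<open>Strata are indexed by a finite type 'd (so d = CARD('d)); a stratum index map
  I sends x to the index of the stratum containing x.  Vectors in R^d are real^'d.\<close>

definition Theta :: "(real^'d) set" where
  "Theta = {\<theta>. (\<forall>i. 0 < \<theta>$i \<and> \<theta>$i < 1) \<and> (\<Sum>i\<in>UNIV. \<theta>$i) = 1}"

definition theta_star :: "'a measure \<Rightarrow> ('a \<Rightarrow> real) \<Rightarrow> ('a \<Rightarrow> 'd::finite) \<Rightarrow> real^'d" where
  "theta_star lam dens I = (\<chi> i. (\<integral>x. dens x * indicator {x\<in>space lam. I x = i} x \<partial>lam))"

definition Zrho :: "'a measure \<Rightarrow> ('a \<Rightarrow> real) \<Rightarrow> ('a \<Rightarrow> 'd::finite) \<Rightarrow> (real \<Rightarrow> real) \<Rightarrow> real^'d \<Rightarrow> real" where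
  "Zrho lam dens I rho \<theta> = (\<Sum>i\<in>UNIV. theta_star lam dens I $ i / rho (\<theta>$i))"

definition pi_rho :: "'a measure \<Rightarrow> ('a \<Rightarrow> real) \<Rightarrow> ('a \<Rightarrow> 'd::finite) \<Rightarrow> (real \<Rightarrow> real) \<Rightarrow> real^'d \<Rightarrow> 'a \<Rightarrow> real" where
  "pi_rho lam dens I rho \<theta> x = dens x / rho (\<theta> $ I x) / Zrho lam dens I rho \<theta>"

definition Hfield :: "(real \<Rightarrow> real) \<Rightarrow> ('a \<Rightarrow> 'd::finite) \<Rightarrow> 'a \<Rightarrow> real^'d \<Rightarrow> real^'d" where
  "Hfield rho I x \<theta> = (\<chi> i. rho (\<theta>$i) * (if I x = i then 1 else 0) - \<theta>$i * rho (\<theta> $ I x))"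

definition hmean :: "'a measure \<Rightarrow> ('a \<Rightarrow> real) \<Rightarrow> ('a \<Rightarrow> 'd::finite) \<Rightarrow> (real \<Rightarrow> real) \<Rightarrow> real^'d \<Rightarrow> real^'d" where
  "hmean lam dens I rho \<theta> = (\<integral>x. pi_rho lam dens I rho \<theta> x *\<^sub>R Hfield rho I x \<theta> \<partial>lam)"

text \<open>Metropolis--Hastings acceptance probability for target density p and a symmetric
  proposal (the usual convention: acceptance 1 when the current density vanishes).\<close>
definition mh_accept :: "('a \<Rightarrow> real) \<Rightarrow> 'a \<Rightarrow> 'a \<Rightarrow> real" where
  "mh_accept p x y = (if 0 < p x then min 1 (p y / p x) else 1)"

definition mh_apply :: "'a measure \<Rightarrow> ('a \<Rightarrow> 'a \<Rightarrow> real) \<Rightarrow> ('a \<Rightarrow> real) \<Rightarrow> ('a \<Rightarrow> 'b::{banach,second_countable_topology}) \<Rightarrow> 'a \<Rightarrow> 'b" where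
  "mh_apply lam q p f x =
     (\<integral>y. (mh_accept p x y * q x y) *\<^sub>R f y \<partial>lam)
     + (1 - (\<integral>y. mh_accept p x y * q x y \<partial>lam)) *\<^sub>R f x"

definition solves_poisson where
  "solves_poisson lam q dens I rho \<theta> g \<longleftrightarrow>
     (\<forall>x\<in>space lam. g x - mh_apply lam q (pi_rho lam dens I rho \<theta>) g x
                     = Hfield rho I x \<theta> - hmean lam dens I rho \<theta>)
   \<and> (\<integral>x. pi_rho lam dens I rho \<theta> x *\<^sub>R g x \<partial>lam) = 0"

end

theory Submission
  imports Defs
begin

text \<open>Since the proposal density is bounded below by \<open>c\<close> and, by A1 and R2, every biased target
  \<open>\<pi>\<^sup>\<rho>\<^sub>\<theta>\<close> is bounded by one constant \<open>K\<close>, every kernel \<open>P\<^sup>\<rho>\<^sub>\<theta>\<close> satisfies the Doeblin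
  minorization \<open>P(x, dy) \<ge> \<epsilon> \<pi>\<^sup>\<rho>\<^sub>\<theta>(y) dy\<close> with \<open>\<epsilon> = min (1/2) (c/K)\<close> independent of \<open>\<theta>\<close>.
  Hence \<open>v \<mapsto> P v - \<epsilon> \<pi>(v)\<close> contracts the sup norm by \<open>1 - \<epsilon>\<close>: the Poisson equation is solved by a
  geometrically convergent iteration, its centred bounded solution is unique, and all bounds are
  uniform in \<open>\<theta>\<close>. For the Lipschitz estimate, the difference of the solutions for \<open>\<theta>\<close> and \<open>\<theta>'\<close>
  solves a Poisson equation for \<open>P\<^sup>\<rho>\<^sub>\<theta>\<close> whose source is the change of \<open>H\<close>, of \<open>\<pi>\<^sup>\<rho>\<close> and of the
  acceptance probabilities; each is linear in \<open>|\<theta> - \<theta>'| + \<Sum>\<^sub>i |1 - \<rho>(\<theta>'\<^sub>i)/\<rho>(\<theta>\<^sub>i)|\<close>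
  as long as the latter sum is at most \<open>1/4\<close>, and beyond that the uniform bound suffices.\<close>

lemma norm_le_of_self_improving_bound:
  fixes u :: "'a \<Rightarrow> 'b::real_normed_vector"
  assumes "A \<noteq> {}" and bounded: "\<forall>x\<in>A. norm (u x) \<le> B"
    and improve: "\<And>S x. \<forall>y\<in>A. norm (u y) \<le> S \<Longrightarrow> x \<in> A \<Longrightarrow> norm (u x) \<le> a + b * S"
    and "b < 1"
  shows "\<forall>x\<in>A. norm (u x) \<le> a / (1 - b)"
proof -
  define S where "S = (SUP y\<in>A. norm (u y))"
  have "bdd_above ((\<lambda>y. norm (u y)) ` A)" using bounded by (auto intro: bdd_aboveI2)
  then have S_upper: "\<forall>y\<in>A. norm (u y) \<le> S" unfolding S_def by (auto intro: cSUP_upper)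
  have "S \<le> a + b * S"
    unfolding S_def using \<open>A \<noteq> {}\<close> improve[OF S_upper] by (subst S_def[symmetric]) (auto intro!: cSUP_least)
  then have "S \<le> a / (1 - b)" using \<open>b < 1\<close> by (simp add: field_simps)
  then show ?thesis using S_upper by auto
qed

lemma summable_geometric_norm_bound:
  fixes a :: "nat \<Rightarrow> 'b::banach"
  assumes a: "\<And>n. norm (a n) \<le> r ^ n * C" and r: "0 \<le> r" "r < 1"
  shows "summable a" and "norm (suminf a) \<le> C / (1 - r)"
proof -
  have sg: "summable (\<lambda>n. r ^ n * C)" using r by (intro summable_mult2 summable_geometric) auto
  have sa: "summable (\<lambda>n. norm (a n))"
    by (rule summable_comparison_test[OF _ sg]) (use a in auto)
  then show "summable a" by (rule summable_norm_cancel)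
  have "norm (suminf a) \<le> (\<Sum>n. norm (a n))" by (rule summable_norm[OF sa])
  also have "\<dots> \<le> (\<Sum>n. r ^ n * C)" by (rule suminf_le[OF _ sa sg]) (use a in auto)
  also have "\<dots> = C / (1 - r)" using suminf_geometric[of r] r
    by (simp add: suminf_mult2[symmetric] divide_simps)
  finally show "norm (suminf a) \<le> C / (1 - r)" .
qed

lemma norm_integral_le_integral:
  fixes f :: "'a \<Rightarrow> 'b::{banach,second_countable_topology}"
  assumes "integrable M f" "integrable M g" "\<And>x. x \<in> space M \<Longrightarrow> norm (f x) \<le> g x"
  shows "norm (\<integral>x. f x \<partial>M) \<le> (\<integral>x. g x \<partial>M)"
  using assms by (smt (verit, best) integrable_norm integral_mono integral_norm_bound)

lemma norm_add4_le: "norm (a + b + c + d) \<le> norm a + norm b + norm c + norm (d::'a::real_normed_vector)"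
  using norm_triangle_ineq[of "a + b + c" d] norm_triangle_ineq[of "a + b" c] norm_triangle_ineq[of a b]
  by linarith

lemma abs_min_one_diff_le:
  fixes u t :: real
  assumes u: "0 \<le> u" and t: "0 < t"
  shows "\<bar>min 1 u - min 1 (u * t)\<bar> \<le> \<bar>1 - t\<bar>"
proof -
  have contract: "\<bar>min 1 u - min 1 (u * t)\<bar> \<le> 1 - t" if "0 \<le> u" "0 < t" "t \<le> 1" for u t :: real
  proof -
    define m m' where "m = min 1 u" and "m' = min 1 (u * t)"
    have "m' \<le> m" unfolding m_def m'_def using that mult_left_le[of t u] by (intro min.mono) auto
    moreover have "t * m \<le> m'"
      unfolding m_def m'_def using that by (auto simp: min_def mult_le_one mult.commute intro: mult_left_mono)
    ultimately have "\<bar>m - m'\<bar> \<le> m * (1 - t)" by (simp add: algebra_simps)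
    also have "\<dots> \<le> 1 - t" unfolding m_def using that by (simp add: mult_left_le_one_le)
    finally show ?thesis unfolding m_def m'_def .
  qed
  show ?thesis
  proof (cases "t \<le> 1")
    case True
    then show ?thesis using contract[OF u t] by simp
  next
    case False
    have "\<bar>min 1 (u * t) - min 1 (u * t * (1 / t))\<bar> \<le> 1 - 1 / t"
      using contract[of "u * t" "1 / t"] u t False by simp
    also have "\<dots> = (t - 1) / t" using t by (simp add: field_simps)
    also have "\<dots> \<le> t - 1" using False by (simp add: pos_divide_le_eq mult_le_cancel_left1)
    finally show ?thesis using t False by (simp add: abs_minus_commute)
  qed
qed

lemma abs_one_minus_divide_le:
  fixes a b s :: real
  assumes a: "\<bar>1 - a\<bar> \<le> s" and b: "\<bar>1 - b\<bar> \<le> s" and s: "s \<le> 1/4"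
  shows "\<bar>1 - a / b\<bar> \<le> 3 * s"
proof -
  have b0: "3/4 \<le> b" using b s by linarith
  then have "1 - a / b = (b - a) / b" by (simp add: field_simps)
  then have "\<bar>1 - a / b\<bar> = \<bar>b - a\<bar> / b" using b0 by simp
  also have "\<dots> \<le> (2 * s) / (3/4)" using a b b0 by (intro frac_le) auto
  also have "\<dots> \<le> 3 * s" using a by simp
  finally show ?thesis .
qed

section \<open>Metropolis--Hastings kernels with a minorized symmetric proposal\<close>

locale symmetric_proposal =
  fixes lam :: "'a measure" and q :: "'a \<Rightarrow> 'a \<Rightarrow> real" and c :: real
  assumes space_nonempty: "space lam \<noteq> {}"
    and q_measurable: "(\<lambda>(x, y). q x y) \<in> borel_measurable (lam \<Otimes>\<^sub>M lam)"
    and q_nonneg: "\<And>x y. x \<in> space lam \<Longrightarrow> y \<in> space lam \<Longrightarrow> 0 \<le> q x y"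
    and q_integrable: "\<And>x. x \<in> space lam \<Longrightarrow> integrable lam (q x)"
    and q_integral: "\<And>x. x \<in> space lam \<Longrightarrow> (\<integral>y. q x y \<partial>lam) = 1"
    and q_sym: "\<And>x y. x \<in> space lam \<Longrightarrow> y \<in> space lam \<Longrightarrow> q x y = q y x"
    and c_pos: "0 < c"
    and q_lower: "\<And>x y. x \<in> space lam \<Longrightarrow> y \<in> space lam \<Longrightarrow> c \<le> q x y"
begin

sublocale finite_measure lam
proof
  obtain x0 where x0: "x0 \<in> space lam" using space_nonempty by auto
  have "(\<integral>\<^sup>+y. ennreal c \<partial>lam) \<le> (\<integral>\<^sup>+y. ennreal (q x0 y) \<partial>lam)"
    using q_lower[OF x0] by (intro nn_integral_mono ennreal_leI)
  also have "\<dots> = 1"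
    using q_integrable[OF x0] q_integral[OF x0] q_nonneg[OF x0] by (subst nn_integral_eq_integral) auto
  finally have "ennreal c * emeasure lam (space lam) \<le> 1" by (simp add: nn_integral_const)
  then show "emeasure lam (space lam) \<noteq> \<infinity>"
    using c_pos by (auto simp: ennreal_mult_eq_top_iff top_unique)
qed

definition bounded_by :: "('a \<Rightarrow> 'b::{banach,second_countable_topology}) \<Rightarrow> real \<Rightarrow> bool" where
  "bounded_by v S \<longleftrightarrow> v \<in> borel_measurable lam \<and> (\<forall>x\<in>space lam. norm (v x) \<le> S)"

lemma bounded_byD:
  assumes "bounded_by v S"
  shows "v \<in> borel_measurable lam" and "x \<in> space lam \<Longrightarrow> norm (v x) \<le> S"
  using assms unfolding bounded_by_def by auto

lemma bounded_by_nonneg: "bounded_by v S \<Longrightarrow> 0 \<le> S"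
  using space_nonempty unfolding bounded_by_def by (meson ex_in_conv norm_ge_zero order_trans)

lemma bounded_by_diff: "bounded_by v S \<Longrightarrow> bounded_by w T \<Longrightarrow> bounded_by (\<lambda>x. v x - w x) (S + T)"
  unfolding bounded_by_def by (auto intro: norm_triangle_le_diff add_mono)

lemma integrable_norm_bounded:
  fixes f :: "'a \<Rightarrow> 'b::{banach,second_countable_topology}"
  shows "f \<in> borel_measurable lam \<Longrightarrow> (\<And>x. x \<in> space lam \<Longrightarrow> norm (f x) \<le> B) \<Longrightarrow> integrable lam f"
  by (rule Bochner_Integration.integrable_bound[where f="\<lambda>_. B"])
     (auto intro!: AE_I2 order_trans[OF _ abs_ge_self])

end

locale mh_kernel = symmetric_proposal +
  fixes K :: real
  assumes K_pos: "0 < K"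
begin

definition target_density :: "('a \<Rightarrow> real) \<Rightarrow> bool" where
  "target_density p \<longleftrightarrow> p \<in> borel_measurable lam \<and> (\<forall>x\<in>space lam. 0 \<le> p x \<and> p x \<le> K)
     \<and> integrable lam p \<and> integral\<^sup>L lam p = 1"

definition "\<epsilon> = min (1/2) (c / K)"

abbreviation expect :: "('a \<Rightarrow> real) \<Rightarrow> ('a \<Rightarrow> 'b::{banach,second_countable_topology}) \<Rightarrow> 'b" where
  "expect p v \<equiv> \<integral>x. p x *\<^sub>R v x \<partial>lam"

abbreviation mh :: "('a \<Rightarrow> real) \<Rightarrow> ('a \<Rightarrow> 'b::{banach,second_countable_topology}) \<Rightarrow> 'a \<Rightarrow> 'b" where
  "mh p \<equiv> mh_apply lam q p"

lemma eps_pos: "0 < \<epsilon>"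
  unfolding \<epsilon>_def using c_pos K_pos by auto

lemma eps_le_half: "\<epsilon> \<le> 1/2"
  unfolding \<epsilon>_def by (rule min.cobounded1)

lemma eps_le: "\<epsilon> \<le> c / K"
  unfolding \<epsilon>_def by (rule min.cobounded2)

lemma target_densityD:
  assumes "target_density p"
  shows "p \<in> borel_measurable lam" "integrable lam p" "integral\<^sup>L lam p = 1"
    and "x \<in> space lam \<Longrightarrow> 0 \<le> p x" "x \<in> space lam \<Longrightarrow> p x \<le> K"
  using assms unfolding target_density_def by auto

lemma mh_accept_bounds:
  "target_density p \<Longrightarrow> x \<in> space lam \<Longrightarrow> y \<in> space lam \<Longrightarrow> 0 \<le> mh_accept p x y \<and> mh_accept p x y \<le> 1"
  unfolding target_density_def mh_accept_def by (auto simp: min_def)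

lemma measurable_mh_accept:
  assumes "target_density p"
  shows "mh_accept p x \<in> borel_measurable lam"
    and "(\<lambda>(x, y). mh_accept p x y * q x y) \<in> borel_measurable (lam \<Otimes>\<^sub>M lam)"
proof -
  have [measurable]: "p \<in> borel_measurable lam" "(\<lambda>(x, y). q x y) \<in> borel_measurable (lam \<Otimes>\<^sub>M lam)"
    using target_densityD(1)[OF assms] q_measurable by auto
  show "mh_accept p x \<in> borel_measurable lam"
    and "(\<lambda>(x, y). mh_accept p x y * q x y) \<in> borel_measurable (lam \<Otimes>\<^sub>M lam)"
    unfolding mh_accept_def by measurable
qed

text \<open>Doeblin minorization: since \<open>q \<ge> c\<close> and \<open>p \<le> K\<close>, the acceptance rate
  \<open>min 1 (p y / p x)\<close> is at least \<open>p y / K\<close>.\<close>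
lemma mh_minorization:
  assumes p: "target_density p" and x: "x \<in> space lam" and y: "y \<in> space lam"
  shows "\<epsilon> * p y \<le> mh_accept p x y * q x y"
proof -
  have px: "0 \<le> p x" "p x \<le> K" and py: "0 \<le> p y" "p y \<le> K"
    using target_densityD[OF p] x y by auto
  have "\<epsilon> * p y \<le> c / K * p y" using eps_le py by (intro mult_right_mono) auto
  also have "\<dots> \<le> c * mh_accept p x y"
  proof -
    have "p y / K \<le> mh_accept p x y"
      using px py K_pos unfolding mh_accept_def by (auto intro: divide_left_mono)
    then have "c * (p y / K) \<le> c * mh_accept p x y" using c_pos by (intro mult_left_mono) auto
    then show ?thesis by simp
  qed
  also have "\<dots> \<le> q x y * mh_accept p x y"
    using mh_accept_bounds[OF p x y] q_lower[OF x y] by (intro mult_right_mono) auto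
  finally show ?thesis by (simp add: mult.commute)
qed

lemma target_mult_mh_accept:
  assumes "target_density p" "x \<in> space lam" "y \<in> space lam"
  shows "p x * mh_accept p x y = min (p x) (p y)"
  using target_densityD(4)[OF assms(1,2)] target_densityD(4)[OF assms(1,3)]
  unfolding mh_accept_def by (auto simp: min_def field_simps)

lemma integrable_mh_accept_scaleR:
  assumes p: "target_density p" and v: "bounded_by v S" and x: "x \<in> space lam"
  shows "integrable lam (\<lambda>y. (mh_accept p x y * q x y) *\<^sub>R v y)"
proof (rule Bochner_Integration.integrable_bound[where f="\<lambda>y. S * q x y"])
  show "integrable lam (\<lambda>y. S * q x y)" using q_integrable[OF x] by auto
  have [measurable]: "v \<in> borel_measurable lam" "mh_accept p x \<in> borel_measurable lam"
    "q x \<in> borel_measurable lam"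
    using bounded_byD(1)[OF v] measurable_mh_accept(1)[OF p] q_integrable[OF x] by auto
  show "(\<lambda>y. (mh_accept p x y * q x y) *\<^sub>R v y) \<in> borel_measurable lam" by measurable
  have "norm ((mh_accept p x y * q x y) *\<^sub>R v y) \<le> norm (S * q x y)" if y: "y \<in> space lam" for y
  proof -
    have a: "0 \<le> mh_accept p x y" "mh_accept p x y \<le> 1" using mh_accept_bounds[OF p x y] by auto
    have "norm ((mh_accept p x y * q x y) *\<^sub>R v y) = mh_accept p x y * q x y * norm (v y)"
      using a q_nonneg[OF x y] by simp
    also have "\<dots> \<le> 1 * q x y * S"
      using a q_nonneg[OF x y] bounded_byD(2)[OF v y] by (intro mult_mono) auto
    finally show ?thesis by (simp add: mult.commute)
  qed
  then show "AE y in lam. norm ((mh_accept p x y * q x y) *\<^sub>R v y) \<le> norm (S * q x y)"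
    by (intro AE_I2)
qed

lemma integrable_mh_accept:
  "target_density p \<Longrightarrow> x \<in> space lam \<Longrightarrow> integrable lam (\<lambda>y. mh_accept p x y * q x y)"
  using integrable_mh_accept_scaleR[of p "\<lambda>_. 1::real" 1 x] unfolding bounded_by_def by simp

lemma integral_mh_accept_bounds:
  assumes p: "target_density p" and x: "x \<in> space lam"
  shows "0 \<le> (\<integral>y. mh_accept p x y * q x y \<partial>lam)" "(\<integral>y. mh_accept p x y * q x y \<partial>lam) \<le> 1"
proof -
  show "0 \<le> (\<integral>y. mh_accept p x y * q x y \<partial>lam)"
    using mh_accept_bounds[OF p x] q_nonneg[OF x] by (intro integral_nonneg_AE AE_I2) auto
  have "(\<integral>y. mh_accept p x y * q x y \<partial>lam) \<le> (\<integral>y. q x y \<partial>lam)"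
    using integrable_mh_accept[OF p x] q_integrable[OF x] mh_accept_bounds[OF p x] q_nonneg[OF x]
    by (intro integral_mono) (auto intro: mult_left_le_one_le)
  then show "(\<integral>y. mh_accept p x y * q x y \<partial>lam) \<le> 1" using q_integral[OF x] by simp
qed

lemma integrable_target_scaleR:
  assumes p: "target_density p" and v: "bounded_by v S"
  shows "integrable lam (\<lambda>y. p y *\<^sub>R v y)"
proof (rule integrable_norm_bounded[where B="K * S"])
  show "(\<lambda>y. p y *\<^sub>R v y) \<in> borel_measurable lam"
    using target_densityD(1)[OF p] bounded_byD(1)[OF v] by measurable
  show "norm (p x *\<^sub>R v x) \<le> K * S" if "x \<in> space lam" for x
    using target_densityD(4,5)[OF p that] bounded_byD(2)[OF v that] by (simp add: mult_mono)
qed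

lemma norm_expect_le:
  assumes p: "target_density p" and v: "bounded_by v S"
  shows "norm (expect p v) \<le> S"
proof -
  have "norm (expect p v) \<le> (\<integral>x. p x * S \<partial>lam)"
  proof (rule norm_integral_le_integral)
    show "integrable lam (\<lambda>x. p x *\<^sub>R v x)" by (rule integrable_target_scaleR[OF p v])
    show "integrable lam (\<lambda>x. p x * S)" using target_densityD(2)[OF p] by simp
    show "norm (p x *\<^sub>R v x) \<le> p x * S" if "x \<in> space lam" for x
      using target_densityD(4)[OF p that] bounded_byD(2)[OF v that] by (simp add: mult_left_mono)
  qed
  also have "\<dots> = S" using target_densityD(3)[OF p] by simp
  finally show ?thesis .
qed

lemma expect_const: "target_density p \<Longrightarrow> expect p (\<lambda>_. a) = a"
  using target_densityD(2,3) by simp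

lemma measurable_mh_apply:
  assumes p: "target_density p" and v: "bounded_by v S"
  shows "mh p v \<in> borel_measurable lam"
proof -
  have [measurable]: "v \<in> borel_measurable lam"
    "(\<lambda>(x, y). mh_accept p x y * q x y) \<in> borel_measurable (lam \<Otimes>\<^sub>M lam)"
    using bounded_byD(1)[OF v] measurable_mh_accept(2)[OF p] by auto
  have [measurable]: "(\<lambda>(x, y). (mh_accept p x y * q x y) *\<^sub>R v y) \<in> borel_measurable (lam \<Otimes>\<^sub>M lam)"
    by measurable
  show ?thesis unfolding mh_apply_def by measurable
qed

lemma mh_apply_diff:
  assumes p: "target_density p" and "bounded_by v S" "bounded_by w T" and x: "x \<in> space lam"
  shows "mh p (\<lambda>y. v y - w y) x = mh p v x - mh p w x"
  using integrable_mh_accept_scaleR[OF p assms(2) x] integrable_mh_accept_scaleR[OF p assms(3) x]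
  unfolding mh_apply_def
  by (simp add: scaleR_diff_right algebra_simps)

lemma mh_apply_zero: "mh p (\<lambda>_. 0::'b::{banach,second_countable_topology}) x = 0"
  unfolding mh_apply_def by simp

lemma norm_mh_apply_le:
  assumes p: "target_density p" and v: "bounded_by v S" and x: "x \<in> space lam"
  shows "norm (mh p v x) \<le> S"
proof -
  define A where "A = (\<integral>y. mh_accept p x y * q x y \<partial>lam)"
  have A: "0 \<le> A" "A \<le> 1" using integral_mh_accept_bounds[OF p x] unfolding A_def by auto
  have "norm (\<integral>y. (mh_accept p x y * q x y) *\<^sub>R v y \<partial>lam) \<le> (\<integral>y. mh_accept p x y * q x y * S \<partial>lam)"
  proof (rule norm_integral_le_integral)
    show "integrable lam (\<lambda>y. (mh_accept p x y * q x y) *\<^sub>R v y)"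
      by (rule integrable_mh_accept_scaleR[OF p v x])
    show "integrable lam (\<lambda>y. mh_accept p x y * q x y * S)" using integrable_mh_accept[OF p x] by auto
    show "norm ((mh_accept p x y * q x y) *\<^sub>R v y) \<le> mh_accept p x y * q x y * S"
      if y: "y \<in> space lam" for y
      using mh_accept_bounds[OF p x y] q_nonneg[OF x y] bounded_byD(2)[OF v y] by (auto intro: mult_left_mono)
  qed
  also have "\<dots> = A * S" unfolding A_def by simp
  finally have "norm (\<integral>y. (mh_accept p x y * q x y) *\<^sub>R v y \<partial>lam) \<le> A * S" .
  moreover have "norm ((1 - A) *\<^sub>R v x) \<le> (1 - A) * S"
    using A bounded_byD(2)[OF v x] by (auto intro: mult_left_mono)
  ultimately have "norm (mh p v x) \<le> A * S + (1 - A) * S"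
    unfolding mh_apply_def A_def[symmetric] by (intro norm_triangle_le) linarith
  then show ?thesis by (simp add: algebra_simps)
qed

text \<open>The minorization makes \<open>mh p - \<epsilon> expect p\<close> a sup-norm contraction with factor \<open>1 - \<epsilon>\<close>:
  it is integration against the nonnegative sub-probability kernel
  \<open>(mh_accept p x y * q x y - \<epsilon> * p y) dy + (1 - A x) \<delta>\<^sub>x\<close>.\<close>
lemma norm_mh_apply_minus_expect_le:
  assumes p: "target_density p" and v: "bounded_by v S" and x: "x \<in> space lam"
  shows "norm (mh p v x - \<epsilon> *\<^sub>R expect p v) \<le> (1 - \<epsilon>) * S"
proof -
  define A where "A = (\<integral>y. mh_accept p x y * q x y \<partial>lam)"
  define k where "k y = mh_accept p x y * q x y - \<epsilon> * p y" for y
  have A: "0 \<le> A" "A \<le> 1" using integral_mh_accept_bounds[OF p x] unfolding A_def by auto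
  have ik: "integrable lam (\<lambda>y. k y *\<^sub>R v y)"
    using integrable_target_scaleR[OF p v] integrable_mh_accept_scaleR[OF p v x] unfolding k_def
    by (simp add: scaleR_diff_left scaleR_scaleR[symmetric] del: scaleR_scaleR)
  have split: "mh p v x - \<epsilon> *\<^sub>R expect p v = (\<integral>y. k y *\<^sub>R v y \<partial>lam) + (1 - A) *\<^sub>R v x"
    using integrable_target_scaleR[OF p v] integrable_mh_accept_scaleR[OF p v x]
    unfolding mh_apply_def A_def[symmetric] k_def
    by (simp add: scaleR_diff_left scaleR_scaleR[symmetric] del: scaleR_scaleR)
  have "norm (\<integral>y. k y *\<^sub>R v y \<partial>lam) \<le> (\<integral>y. k y * S \<partial>lam)"
  proof (rule norm_integral_le_integral[OF ik])
    show "integrable lam (\<lambda>y. k y * S)"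
      using integrable_mh_accept[OF p x] target_densityD(2)[OF p] unfolding k_def by auto
    show "norm (k y *\<^sub>R v y) \<le> k y * S" if y: "y \<in> space lam" for y
      using mh_minorization[OF p x y] bounded_byD(2)[OF v y] unfolding k_def by (auto intro: mult_left_mono)
  qed
  also have "\<dots> = (A - \<epsilon>) * S"
    using integrable_mh_accept[OF p x] target_densityD(2,3)[OF p]
    unfolding A_def k_def by (simp add: left_diff_distrib)
  finally have "norm (\<integral>y. k y *\<^sub>R v y \<partial>lam) \<le> (A - \<epsilon>) * S" .
  moreover have "norm ((1 - A) *\<^sub>R v x) \<le> (1 - A) * S"
    using A bounded_byD(2)[OF v x] by (auto intro: mult_left_mono)
  ultimately have "norm (mh p v x - \<epsilon> *\<^sub>R expect p v) \<le> (A - \<epsilon>) * S + (1 - A) * S"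
    unfolding split by (intro norm_triangle_le) linarith
  then show ?thesis by (simp add: algebra_simps)
qed

lemma integrable_mh_flow:
  assumes p: "target_density p" and v: "bounded_by v S"
  shows "integrable (lam \<Otimes>\<^sub>M lam) (\<lambda>(x, y). (p x * (mh_accept p x y * q x y)) *\<^sub>R v y)"
    (is "integrable _ (\<lambda>(x, y). ?F x y)")
proof -
  interpret pair_sigma_finite lam lam ..
  have [measurable]: "v \<in> borel_measurable lam" "p \<in> borel_measurable lam"
    "(\<lambda>(x, y). mh_accept p x y * q x y) \<in> borel_measurable (lam \<Otimes>\<^sub>M lam)"
    using bounded_byD(1)[OF v] target_densityD(1)[OF p] measurable_mh_accept(2)[OF p] by auto
  have Fx: "integrable lam (?F x)" if x: "x \<in> space lam" for x
    using integrable_scaleR_right[OF integrable_mh_accept_scaleR[OF p v x], of "p x"] by simp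
  show ?thesis
  proof (rule Fubini_integrable)
    show "(\<lambda>(x, y). ?F x y) \<in> borel_measurable (lam \<Otimes>\<^sub>M lam)" by measurable
    show "AE x in lam. integrable lam (\<lambda>y. case (x, y) of (x, y) \<Rightarrow> ?F x y)"
      using Fx by (simp add: AE_I2)
    show "integrable lam (\<lambda>x. \<integral>y. norm (case (x, y) of (x, y) \<Rightarrow> ?F x y) \<partial>lam)"
    proof (rule integrable_norm_bounded[where B="K * S"])
      show "(\<lambda>x. \<integral>y. norm (case (x, y) of (x, y) \<Rightarrow> ?F x y) \<partial>lam) \<in> borel_measurable lam"
        by measurable
      fix x assume x: "x \<in> space lam"
      have "(\<integral>y. norm (?F x y) \<partial>lam) \<le> (\<integral>y. K * S * q x y \<partial>lam)"
      proof (rule integral_mono)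
        show "integrable lam (\<lambda>y. norm (?F x y))" using integrable_norm[OF Fx[OF x]] .
        show "integrable lam (\<lambda>y. K * S * q x y)" using q_integrable[OF x] by auto
        fix y assume y: "y \<in> space lam"
        have a: "0 \<le> mh_accept p x y" "mh_accept p x y \<le> 1" using mh_accept_bounds[OF p x y] by auto
        have "norm (?F x y) = p x * (mh_accept p x y * q x y) * norm (v y)"
          using a q_nonneg[OF x y] target_densityD(4)[OF p x] by simp
        also have "\<dots> \<le> K * (1 * q x y) * S"
          using a q_nonneg[OF x y] target_densityD(4,5)[OF p x] bounded_byD(2)[OF v y]
          by (intro mult_mono) auto
        finally show "norm (?F x y) \<le> K * S * q x y" by (simp add: algebra_simps)
      qed
      then show "norm (\<integral>y. norm (case (x, y) of (x, y) \<Rightarrow> ?F x y) \<partial>lam) \<le> K * S"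
        using q_integral[OF x] by simp
    qed
  qed
qed

text \<open>Invariance of the target: by detailed balance (\<open>target_mult_mh_accept\<close> and the symmetry
  of \<open>q\<close>) the flow out of \<open>x\<close> equals the flow into \<open>x\<close>, so the two cancel after Fubini.\<close>
lemma expect_mh_apply:
  assumes p: "target_density p" and v: "bounded_by v S"
  shows "expect p (mh p v) = expect p v"
proof -
  interpret pair_sigma_finite lam lam ..
  define F where "F x y = (p x * (mh_accept p x y * q x y)) *\<^sub>R v y" for x y
  have Fint: "integrable (lam \<Otimes>\<^sub>M lam) (\<lambda>(x, y). F x y)"
    unfolding F_def by (rule integrable_mh_flow[OF p v])
  have pointwise: "p x *\<^sub>R mh p v x = (\<integral>y. F x y \<partial>lam) + p x *\<^sub>R v x - (\<integral>y. F y x \<partial>lam)"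
    if x: "x \<in> space lam" for x
  proof -
    define A where "A = (\<integral>y. mh_accept p x y * q x y \<partial>lam)"
    have "(\<integral>y. F y x \<partial>lam) = (\<integral>y. (p x * (mh_accept p x y * q x y)) *\<^sub>R v x \<partial>lam)"
    proof (rule Bochner_Integration.integral_cong[OF refl])
      fix y assume y: "y \<in> space lam"
      have "p y * (mh_accept p y x * q y x) = p x * (mh_accept p x y * q x y)"
        using target_mult_mh_accept[OF p x y] target_mult_mh_accept[OF p y x] q_sym[OF x y]
        by (metis min.commute mult.assoc)
      then show "F y x = (p x * (mh_accept p x y * q x y)) *\<^sub>R v x" unfolding F_def by simp
    qed
    also have "\<dots> = (p x * A) *\<^sub>R v x"
      using integrable_mh_accept[OF p x] unfolding A_def by simp
    finally have "(\<integral>y. F y x \<partial>lam) = (p x * A) *\<^sub>R v x" .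
    moreover have "p x *\<^sub>R (\<integral>y. (mh_accept p x y * q x y) *\<^sub>R v y \<partial>lam) = (\<integral>y. F x y \<partial>lam)"
      unfolding F_def by (simp add: scaleR_scaleR[symmetric] del: scaleR_scaleR)
    ultimately show ?thesis unfolding mh_apply_def A_def[symmetric]
      by (simp add: scaleR_add_right algebra_simps)
  qed
  have "expect p (mh p v)
      = (\<integral>x. (\<integral>y. F x y \<partial>lam) + p x *\<^sub>R v x - (\<integral>y. F y x \<partial>lam) \<partial>lam)"
    using pointwise by (intro Bochner_Integration.integral_cong) auto
  also have "\<dots> = (\<integral>x. (\<integral>y. F x y \<partial>lam) \<partial>lam) + expect p v - (\<integral>x. (\<integral>y. F y x \<partial>lam) \<partial>lam)"
    using integrable_fst'[OF Fint] integrable_snd[of F] Fint integrable_target_scaleR[OF p v] by simp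
  also have "(\<integral>x. (\<integral>y. F y x \<partial>lam) \<partial>lam) = (\<integral>x. (\<integral>y. F x y \<partial>lam) \<partial>lam)"
    using Fubini_integral[of F] Fint by simp
  finally show ?thesis by simp
qed

lemma poisson_unique:
  assumes p: "target_density p" and g1: "bounded_by g1 S1" and g2: "bounded_by g2 S2"
    and eq1: "\<forall>x\<in>space lam. g1 x - mh p g1 x = f x" and centered1: "expect p g1 = 0"
    and eq2: "\<forall>x\<in>space lam. g2 x - mh p g2 x = f x" and centered2: "expect p g2 = 0"
  shows "\<forall>x\<in>space lam. g1 x = g2 x"
proof -
  define u where "u x = g1 x - g2 x" for x
  have u: "bounded_by u (S1 + S2)" unfolding u_def by (rule bounded_by_diff[OF g1 g2])
  have "expect p u = 0"
    unfolding u_def using integrable_target_scaleR[OF p g1] integrable_target_scaleR[OF p g2]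
      centered1 centered2 by (simp add: scaleR_diff_right)
  then have u_fix: "u x = mh p u x - \<epsilon> *\<^sub>R expect p u" if x: "x \<in> space lam" for x
    using eq1 eq2 x mh_apply_diff[OF p g1 g2 x] unfolding u_def by (auto simp: algebra_simps)
  have "\<forall>x\<in>space lam. norm (u x) \<le> 0 / (1 - (1 - \<epsilon>))"
  proof (rule norm_le_of_self_improving_bound[OF space_nonempty])
    show "\<forall>x\<in>space lam. norm (u x) \<le> S1 + S2" using bounded_byD(2)[OF u] by auto
    fix S x assume "\<forall>y\<in>space lam. norm (u y) \<le> S" and x: "x \<in> space lam"
    then have "bounded_by u S" using bounded_byD(1)[OF u] unfolding bounded_by_def by auto
    then show "norm (u x) \<le> 0 + (1 - \<epsilon>) * S"
      using norm_mh_apply_minus_expect_le[OF p _ x] u_fix[OF x] by simp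
  qed (use eps_pos in auto)
  then show ?thesis unfolding u_def by auto
qed

text \<open>Subtracting \<open>\<epsilon> *\<^sub>R expect p\<close> turns \<open>mh p\<close> into a contraction, so \<open>poisson_map p f\<close> has a
  fixed point; for centred \<open>f\<close> it is a centred solution of the Poisson equation.\<close>
definition poisson_map :: "('a \<Rightarrow> real) \<Rightarrow> ('a \<Rightarrow> 'b::{banach,second_countable_topology}) \<Rightarrow> ('a \<Rightarrow> 'b) \<Rightarrow> 'a \<Rightarrow> 'b" where
  "poisson_map p f v x = f x + mh p v x - \<epsilon> *\<^sub>R expect p v"

lemma bounded_by_poisson_map:
  assumes p: "target_density p" and f: "bounded_by f Sf" and v: "bounded_by v S"
  shows "bounded_by (poisson_map p f v) (Sf + (1 - \<epsilon>) * S)"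
proof -
  have [measurable]: "f \<in> borel_measurable lam" "mh p v \<in> borel_measurable lam"
    using bounded_byD(1)[OF f] measurable_mh_apply[OF p v] by auto
  have "norm (poisson_map p f v x) \<le> Sf + (1 - \<epsilon>) * S" if x: "x \<in> space lam" for x
  proof -
    have "norm (poisson_map p f v x) \<le> norm (f x) + norm (mh p v x - \<epsilon> *\<^sub>R expect p v)"
      unfolding poisson_map_def by (metis add_diff_eq norm_triangle_ineq)
    then show ?thesis
      using bounded_byD(2)[OF f x] norm_mh_apply_minus_expect_le[OF p v x] by linarith
  qed
  moreover have "poisson_map p f v \<in> borel_measurable lam"
    unfolding poisson_map_def[abs_def] by measurable
  ultimately show ?thesis unfolding bounded_by_def by auto
qed

lemma poisson_map_diff:
  assumes p: "target_density p" and v: "bounded_by v S" and w: "bounded_by w T" and x: "x \<in> space lam"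
  shows "poisson_map p f v x - poisson_map p f w x
    = mh p (\<lambda>y. v y - w y) x - \<epsilon> *\<^sub>R expect p (\<lambda>y. v y - w y)"
proof -
  have "expect p (\<lambda>y. v y - w y) = expect p v - expect p w"
    using integrable_target_scaleR[OF p v] integrable_target_scaleR[OF p w]
    by (simp add: scaleR_diff_right)
  then show ?thesis
    unfolding poisson_map_def mh_apply_diff[OF p v w x] by (simp add: scaleR_diff_right)
qed

lemma norm_poisson_map_diff_le:
  assumes p: "target_density p" and v: "bounded_by v S" and w: "bounded_by w T"
    and vw: "bounded_by (\<lambda>y. v y - w y) D" and x: "x \<in> space lam"
  shows "norm (poisson_map p f v x - poisson_map p f w x) \<le> (1 - \<epsilon>) * D"
  unfolding poisson_map_diff[OF p v w x] by (rule norm_mh_apply_minus_expect_le[OF p vw x])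

lemma poisson_map_iterates:
  assumes p: "target_density p" and f: "bounded_by f Sf"
  defines "G n \<equiv> (poisson_map p f ^^ n) (\<lambda>_. 0)"
  shows "\<exists>S. bounded_by (G n) S"
    and "bounded_by (\<lambda>x. G (Suc n) x - G n x) ((1 - \<epsilon>) ^ n * Sf)"
proof -
  show G: "\<exists>S. bounded_by (G n) S" for n
  proof (induction n)
    case 0 show ?case unfolding G_def bounded_by_def by auto
  next
    case (Suc n)
    then show ?case unfolding G_def using bounded_by_poisson_map[OF p f] by auto
  qed
  show "bounded_by (\<lambda>x. G (Suc n) x - G n x) ((1 - \<epsilon>) ^ n * Sf)"
  proof (induction n)
    case 0
    show ?case using f unfolding G_def by (simp add: poisson_map_def mh_apply_zero)
  next
    case (Suc n)
    obtain S1 S0 where S1: "bounded_by (G (Suc n)) S1" and S0: "bounded_by (G n) S0" using G by blast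
    have "norm (G (Suc (Suc n)) x - G (Suc n) x) \<le> (1 - \<epsilon>) ^ Suc n * Sf" if x: "x \<in> space lam" for x
      using norm_poisson_map_diff_le[OF p S1 S0 Suc.IH x, of f] unfolding G_def by (simp add: mult.assoc)
    moreover obtain S2 where "bounded_by (G (Suc (Suc n))) S2" using G by blast
    then have "(\<lambda>x. G (Suc (Suc n)) x - G (Suc n) x) \<in> borel_measurable lam"
      using bounded_byD(1)[OF S1] bounded_byD(1) by (intro borel_measurable_diff)
    ultimately show ?case unfolding bounded_by_def by auto
  qed
qed

lemma poisson_map_fixed_point:
  assumes p: "target_density p" and f: "bounded_by f Sf"
  shows "\<exists>h. bounded_by h (Sf / \<epsilon>) \<and> (\<forall>x\<in>space lam. poisson_map p f h x = h x)"
proof -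
  define r where "r = 1 - \<epsilon>"
  have r: "0 \<le> r" "r < 1" "1 - r = \<epsilon>" using eps_pos eps_le_half unfolding r_def by auto
  define G where "G n = (poisson_map p f ^^ n) (\<lambda>_. 0)" for n
  define d where "d n x = G (Suc n) x - G n x" for n x
  have G_bdd: "\<exists>S. bounded_by (G n) S" for n
    unfolding G_def by (rule poisson_map_iterates(1)[OF p f])
  have d_bdd: "bounded_by (d n) (r ^ n * Sf)" for n
    unfolding d_def[abs_def] G_def r_def by (rule poisson_map_iterates(2)[OF p f])
  have G_sum: "G n x = (\<Sum>k<n. d k x)" for n x
    unfolding d_def using sum_lessThan_telescope[of "\<lambda>k. G k x" n] by (simp add: G_def)
  define h where "h x = (\<Sum>n. d n x)" for x
  have tail: "norm (h x - G n x) \<le> r ^ n * Sf / \<epsilon>" if x: "x \<in> space lam" for x n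
  proof -
    have shifted: "norm (d (k + n) x) \<le> r ^ k * (r ^ n * Sf)" for k
      using bounded_byD(2)[OF d_bdd x, of "k + n"] by (simp add: power_add mult_ac)
    then have "summable (\<lambda>k. d k x)"
      using summable_geometric_norm_bound(1)[OF shifted r(1,2)] summable_iff_shift by blast
    then have "h x - G n x = (\<Sum>k. d (k + n) x)"
      unfolding h_def G_sum using suminf_split_initial_segment[of "\<lambda>k. d k x" n] by simp
    then show ?thesis using summable_geometric_norm_bound(2)[OF shifted r(1,2)] r by simp
  qed
  have h_lim: "(\<lambda>n. G n x) \<longlonglongrightarrow> h x" if x: "x \<in> space lam" for x
  proof -
    have "norm (d k x) \<le> r ^ k * Sf" for k using bounded_byD(2)[OF d_bdd x] .
    then have "summable (\<lambda>k. d k x)" by (rule summable_geometric_norm_bound(1)[OF _ r(1,2)])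
    then show ?thesis unfolding G_sum h_def by (rule summable_LIMSEQ)
  qed
  have "h \<in> borel_measurable lam"
  proof (rule borel_measurable_LIMSEQ_metric[of G])
    show "G n \<in> borel_measurable lam" for n using G_bdd[of n] bounded_byD(1) by blast
  qed (rule h_lim)
  then have h: "bounded_by h (Sf / \<epsilon>)"
    unfolding bounded_by_def using tail[of _ 0] by (simp add: G_def)
  have "poisson_map p f h x = h x" if x: "x \<in> space lam" for x
  proof -
    have "norm (poisson_map p f (G n) x - poisson_map p f h x) \<le> (1 - \<epsilon>) * (r ^ n * Sf / \<epsilon>)" for n
    proof -
      obtain S where S: "bounded_by (G n) S" using G_bdd by blast
      have "bounded_by (\<lambda>y. G n y - h y) (r ^ n * Sf / \<epsilon>)"
        using bounded_byD(1)[OF S] bounded_byD(1)[OF h] tail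
        unfolding bounded_by_def by (auto simp: norm_minus_commute)
      then show ?thesis by (rule norm_poisson_map_diff_le[OF p S h _ x])
    qed
    then have "\<forall>\<^sub>F n in sequentially.
        norm (poisson_map p f (G n) x - poisson_map p f h x) \<le> (1 - \<epsilon>) * (r ^ n * Sf / \<epsilon>)"
      by (intro always_eventually allI)
    moreover have "(\<lambda>n. (1 - \<epsilon>) * (r ^ n * Sf / \<epsilon>)) \<longlonglongrightarrow> 0"
      using r by (intro tendsto_mult_right_zero tendsto_divide_zero tendsto_mult_left_zero
          LIMSEQ_power_zero) auto
    ultimately have "(\<lambda>n. poisson_map p f (G n) x - poisson_map p f h x) \<longlonglongrightarrow> 0"
      by (rule Lim_null_comparison)
    then have "(\<lambda>n. poisson_map p f (G n) x) \<longlonglongrightarrow> poisson_map p f h x"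
      by (simp add: LIM_zero_iff)
    moreover have "(\<lambda>n. poisson_map p f (G n) x) \<longlonglongrightarrow> h x"
      using LIMSEQ_Suc[OF h_lim[OF x]] by (simp add: G_def)
    ultimately show ?thesis by (rule LIMSEQ_unique)
  qed
  with h show ?thesis by blast
qed

text \<open>Integrating the fixed-point equation against \<open>p\<close> and using invariance leaves
  \<open>\<epsilon> *\<^sub>R expect p h = 0\<close>.\<close>
lemma poisson_exists:
  fixes f :: "'a \<Rightarrow> 'b::{banach,second_countable_topology}"
  assumes p: "target_density p" and f: "bounded_by f Sf" and centered: "expect p f = 0"
  shows "\<exists>h. bounded_by h (Sf / \<epsilon>) \<and> (\<forall>x\<in>space lam. h x - mh p h x = f x) \<and> expect p h = 0"
proof -
  obtain h where h: "bounded_by h (Sf / \<epsilon>)" and fixed: "\<forall>x\<in>space lam. poisson_map p f h x = h x"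
    using poisson_map_fixed_point[OF p f] by blast
  have Ph: "bounded_by (mh p h) (Sf / \<epsilon>)"
    unfolding bounded_by_def using measurable_mh_apply[OF p h] norm_mh_apply_le[OF p h] by auto
  have "expect p h = expect p (\<lambda>x. f x + mh p h x - \<epsilon> *\<^sub>R expect p h)"
    using fixed by (intro Bochner_Integration.integral_cong) (auto simp: poisson_map_def)
  also have "\<dots> = expect p f + expect p (mh p h) - \<epsilon> *\<^sub>R expect p h"
    using integrable_target_scaleR[OF p f] integrable_target_scaleR[OF p Ph]
      integrable_scaleR_left[OF target_densityD(2)[OF p], of "\<epsilon> *\<^sub>R expect p h"]
      expect_const[OF p, of "\<epsilon> *\<^sub>R expect p h"]
    by (simp add: scaleR_add_right scaleR_diff_right)
  finally have "\<epsilon> *\<^sub>R expect p h = 0"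
    unfolding centered expect_mh_apply[OF p h] by simp
  then have "expect p h = 0" using eps_pos by simp
  moreover have "\<forall>x\<in>space lam. h x - mh p h x = f x"
    using fixed \<open>expect p h = 0\<close> by (auto simp: poisson_map_def algebra_simps)
  ultimately show ?thesis using h by blast
qed

lemma norm_expect_target_diff_le:
  assumes p: "target_density p" and p': "target_density p'" and v: "bounded_by v S"
    and D: "\<And>y. y \<in> space lam \<Longrightarrow> \<bar>p y - p' y\<bar> \<le> D"
  shows "norm (expect p v - expect p' v) \<le> D * S * measure lam (space lam)"
proof -
  have "expect p v - expect p' v = (\<integral>x. (p x - p' x) *\<^sub>R v x \<partial>lam)"
    using integrable_target_scaleR[OF p v] integrable_target_scaleR[OF p' v]
    by (simp add: scaleR_diff_left)
  also have "norm \<dots> \<le> (\<integral>x. D * S \<partial>lam)"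
  proof (rule norm_integral_le_integral)
    show "integrable lam (\<lambda>x. (p x - p' x) *\<^sub>R v x)"
      using integrable_target_scaleR[OF p v] integrable_target_scaleR[OF p' v]
      by (simp add: scaleR_diff_left)
    show "norm ((p x - p' x) *\<^sub>R v x) \<le> D * S" if x: "x \<in> space lam" for x
      using D[OF x] bounded_byD(2)[OF v x] by (simp add: mult_mono)
  qed simp
  finally show ?thesis by (simp add: mult_ac)
qed

lemma norm_mh_apply_target_diff_le:
  assumes p: "target_density p" and p': "target_density p'" and v: "bounded_by v S"
    and x: "x \<in> space lam"
    and A: "\<And>y. y \<in> space lam \<Longrightarrow> \<bar>mh_accept p x y - mh_accept p' x y\<bar> \<le> A"
  shows "norm (mh p v x - mh p' v x) \<le> 2 * A * S"
proof -
  define a where "a y = mh_accept p x y * q x y - mh_accept p' x y * q x y" for y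
  have a_bound: "\<bar>a y\<bar> \<le> A * q x y" if y: "y \<in> space lam" for y
  proof -
    have "\<bar>a y\<bar> = \<bar>mh_accept p x y - mh_accept p' x y\<bar> * q x y"
      unfolding a_def using q_nonneg[OF x y] by (simp add: left_diff_distrib[symmetric] abs_mult)
    also have "\<dots> \<le> A * q x y" using A[OF y] q_nonneg[OF x y] by (rule mult_right_mono)
    finally show ?thesis .
  qed
  have ia: "integrable lam a"
    unfolding a_def using integrable_mh_accept[OF p x] integrable_mh_accept[OF p' x] by simp
  have iav: "integrable lam (\<lambda>y. a y *\<^sub>R v y)"
    unfolding a_def using integrable_mh_accept_scaleR[OF p v x] integrable_mh_accept_scaleR[OF p' v x]
    by (simp add: scaleR_diff_left)
  have "mh p v x - mh p' v x = (\<integral>y. a y *\<^sub>R v y \<partial>lam) - (\<integral>y. a y \<partial>lam) *\<^sub>R v x"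
    unfolding mh_apply_def a_def
    using integrable_mh_accept_scaleR[OF p v x] integrable_mh_accept_scaleR[OF p' v x]
      integrable_mh_accept[OF p x] integrable_mh_accept[OF p' x]
    by (simp add: scaleR_diff_left algebra_simps)
  moreover have "norm (\<integral>y. a y *\<^sub>R v y \<partial>lam) \<le> (\<integral>y. A * q x y * S \<partial>lam)"
  proof (rule norm_integral_le_integral[OF iav])
    show "integrable lam (\<lambda>y. A * q x y * S)" using q_integrable[OF x] by simp
    show "norm (a y *\<^sub>R v y) \<le> A * q x y * S" if y: "y \<in> space lam" for y
      using mult_mono[OF a_bound[OF y] bounded_byD(2)[OF v y] order_trans[OF abs_ge_zero a_bound[OF y]]]
      by simp
  qed
  moreover have "\<bar>\<integral>y. a y \<partial>lam\<bar> \<le> (\<integral>y. A * q x y \<partial>lam)"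
    using ia q_integrable[OF x] a_bound by (intro norm_integral_le_integral[where f=a, simplified]) auto
  moreover have "\<bar>\<integral>y. a y \<partial>lam\<bar> * norm (v x) \<le> A * S" if "\<bar>\<integral>y. a y \<partial>lam\<bar> \<le> A"
    using that bounded_byD(2)[OF v x] bounded_by_nonneg[OF v] by (intro mult_mono) auto
  ultimately show ?thesis
    using q_integral[OF x] norm_triangle_ineq4[of "\<integral>y. a y *\<^sub>R v y \<partial>lam" "(\<integral>y. a y \<partial>lam) *\<^sub>R v x"]
    by simp
qed

end

section \<open>The stratified update field\<close>

lemma Theta_component: "\<theta> \<in> Theta \<Longrightarrow> 0 < \<theta>$i \<and> \<theta>$i < 1"
  unfolding Theta_def by auto

lemma Theta_sum: "\<theta> \<in> Theta \<Longrightarrow> (\<Sum>i\<in>UNIV. \<theta>$i) = 1"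
  unfolding Theta_def by auto

lemma Hfield_component: "Hfield rho I x \<theta> $ i = rho (\<theta>$i) * (if I x = i then 1 else 0) - \<theta>$i * rho (\<theta> $ I x)"
  unfolding Hfield_def by simp

lemma norm_Hfield_le:
  fixes \<theta> :: "real^'d"
  assumes \<theta>: "\<theta> \<in> Theta" and rho: "\<And>i. 0 \<le> rho (\<theta>$i)" "\<And>i. rho (\<theta>$i) \<le> R"
  shows "norm (Hfield rho I x \<theta>) \<le> sqrt 2 * R"
proof -
  let ?j = "I x" and ?v = "Hfield rho I x \<theta>"
  let ?r = "rho (\<theta>$?j)"
  have tj: "0 < \<theta>$?j" "\<theta>$?j < 1" using Theta_component[OF \<theta>] by auto
  have "(?v$?j)^2 = ?r^2 * (1 - \<theta>$?j)^2"
    unfolding Hfield_component by (simp add: power2_eq_square algebra_simps)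
  also have "\<dots> \<le> ?r^2 * 1" using tj by (intro mult_left_mono power_le_one) auto
  finally have "(?v$?j)^2 \<le> ?r^2" by simp
  moreover have "(\<Sum>i\<in>UNIV-{?j}. (?v$i)^2) \<le> ?r^2"
  proof -
    have "(?v$i)^2 \<le> ?r^2 * \<theta>$i" if "i \<in> UNIV-{?j}" for i
    proof -
      have "(?v$i)^2 = ?r^2 * (\<theta>$i * \<theta>$i)" using that unfolding Hfield_component
        by (simp add: power2_eq_square)
      also have "\<dots> \<le> ?r^2 * \<theta>$i"
        using Theta_component[OF \<theta>, of i] by (intro mult_left_mono) (auto simp: mult_le_cancel_left1)
      finally show ?thesis .
    qed
    then have "(\<Sum>i\<in>UNIV-{?j}. (?v$i)^2) \<le> (\<Sum>i\<in>UNIV-{?j}. ?r^2 * \<theta>$i)" by (rule sum_mono)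
    also have "\<dots> = ?r^2 * (1 - \<theta>$?j)"
      using Theta_sum[OF \<theta>] by (simp add: sum_distrib_left[symmetric] sum_diff1)
    also have "\<dots> \<le> ?r^2" using tj by (intro mult_left_le) auto
    finally show ?thesis .
  qed
  moreover have "(\<Sum>i\<in>UNIV. (?v$i)^2) = (?v$?j)^2 + (\<Sum>i\<in>UNIV-{?j}. (?v$i)^2)"
    by (simp add: sum.remove)
  moreover have "?r^2 \<le> R^2" using rho by (intro power_mono) auto
  ultimately have "(\<Sum>i\<in>UNIV. (?v$i)^2) \<le> 2 * R^2" by linarith
  then have "sqrt (\<Sum>i\<in>UNIV. (?v$i)^2) \<le> sqrt (2 * R^2)" by (rule real_sqrt_le_mono)
  also have "\<dots> = sqrt 2 * R" using rho(1)[of ?j] rho(2)[of ?j] by (simp add: real_sqrt_mult)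
  finally have "sqrt (\<Sum>i\<in>UNIV. (?v$i)^2) \<le> sqrt 2 * R" .
  then show ?thesis unfolding norm_vec_def L2_set_def by simp
qed

definition rho_ratio_dev :: "(real \<Rightarrow> real) \<Rightarrow> real^'d \<Rightarrow> real^'d \<Rightarrow> real" where
  "rho_ratio_dev rho \<theta> \<theta>' = (\<Sum>i\<in>UNIV. \<bar>1 - rho (\<theta>'$i) / rho (\<theta>$i)\<bar>)"

lemma rho_ratio_dev_nonneg: "0 \<le> rho_ratio_dev rho \<theta> \<theta>'"
  unfolding rho_ratio_dev_def by (simp add: sum_nonneg)

lemma abs_one_minus_rho_ratio_le: "\<bar>1 - rho (\<theta>'$i) / rho (\<theta>$i)\<bar> \<le> rho_ratio_dev rho \<theta> \<theta>'"
  unfolding rho_ratio_dev_def by (rule member_le_sum) auto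

lemma abs_rho_diff_le:
  assumes "0 < rho (\<theta>$i)" "rho (\<theta>$i) \<le> R"
  shows "\<bar>rho (\<theta>$i) - rho (\<theta>'$i)\<bar> \<le> R * rho_ratio_dev rho \<theta> \<theta>'"
proof -
  have "rho (\<theta>$i) - rho (\<theta>'$i) = rho (\<theta>$i) * (1 - rho (\<theta>'$i) / rho (\<theta>$i))"
    using assms by (simp add: field_simps)
  then have "\<bar>rho (\<theta>$i) - rho (\<theta>'$i)\<bar> = rho (\<theta>$i) * \<bar>1 - rho (\<theta>'$i) / rho (\<theta>$i)\<bar>"
    using assms by (simp add: abs_mult)
  also have "\<dots> \<le> R * rho_ratio_dev rho \<theta> \<theta>'"
    using assms abs_one_minus_rho_ratio_le by (intro mult_mono) auto
  finally show ?thesis .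
qed

lemma norm_Hfield_diff_le:
  fixes \<theta> \<theta>' :: "real^'d"
  assumes \<theta>: "\<theta> \<in> Theta" and \<theta>': "\<theta>' \<in> Theta"
    and rho: "\<And>i. 0 < rho (\<theta>$i)" "\<And>i. rho (\<theta>$i) \<le> R"
  shows "norm (Hfield rho I x \<theta> - Hfield rho I x \<theta>')
    \<le> real CARD('d) * (2 * R * (norm (\<theta> - \<theta>') + rho_ratio_dev rho \<theta> \<theta>'))"
proof -
  let ?j = "I x" and ?s = "rho_ratio_dev rho \<theta> \<theta>'"
  have R: "0 \<le> R" using rho by (meson less_le_trans less_imp_le)
  have "\<bar>(Hfield rho I x \<theta> - Hfield rho I x \<theta>')$i\<bar> \<le> 2 * R * (norm (\<theta> - \<theta>') + ?s)" for i
  proof -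
    have "(Hfield rho I x \<theta> - Hfield rho I x \<theta>')$i
        = (rho (\<theta>$i) - rho (\<theta>'$i)) * (if ?j = i then 1 else 0)
          - ((\<theta>$i - \<theta>'$i) * rho (\<theta>$?j) + \<theta>'$i * (rho (\<theta>$?j) - rho (\<theta>'$?j)))"
      by (simp only: vector_minus_component Hfield_component) (simp add: algebra_simps)
    moreover have "\<bar>(rho (\<theta>$i) - rho (\<theta>'$i)) * (if ?j = i then 1 else 0)\<bar> \<le> R * ?s"
      using abs_rho_diff_le[of rho \<theta> i R \<theta>', OF rho(1) rho(2)] R rho_ratio_dev_nonneg[of rho \<theta> \<theta>'] by auto
    moreover have "\<bar>(\<theta>$i - \<theta>'$i) * rho (\<theta>$?j)\<bar> \<le> norm (\<theta> - \<theta>') * R"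
      using component_le_norm_cart[of "\<theta> - \<theta>'" i] rho[of ?j] by (simp add: abs_mult mult_mono)
    moreover have "\<bar>\<theta>'$i * (rho (\<theta>$?j) - rho (\<theta>'$?j))\<bar> \<le> R * ?s"
    proof -
      have "\<bar>\<theta>'$i * (rho (\<theta>$?j) - rho (\<theta>'$?j))\<bar> \<le> \<bar>rho (\<theta>$?j) - rho (\<theta>'$?j)\<bar>"
        using Theta_component[OF \<theta>', of i] by (simp add: abs_mult mult_left_le_one_le)
      then show ?thesis using abs_rho_diff_le[of rho \<theta> ?j R \<theta>', OF rho(1) rho(2)] by linarith
    qed
    ultimately show ?thesis using R rho_ratio_dev_nonneg[of rho \<theta> \<theta>'] by (simp add: algebra_simps)
  qed
  then have "(\<Sum>i\<in>UNIV. \<bar>(Hfield rho I x \<theta> - Hfield rho I x \<theta>')$i\<bar>)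
      \<le> (\<Sum>i\<in>(UNIV::'d set). 2 * R * (norm (\<theta> - \<theta>') + ?s))"
    by (intro sum_mono)
  then show ?thesis using norm_le_l1_cart[of "Hfield rho I x \<theta> - Hfield rho I x \<theta>'"] by simp
qed

section \<open>The stratified Metropolis--Hastings kernels\<close>

locale stratified_mh = symmetric_proposal lam q c
  for lam :: "'a measure" and q c +
  fixes dens :: "'a \<Rightarrow> real" and I :: "'a \<Rightarrow> 'd::finite" and rho :: "real \<Rightarrow> real"
  assumes dens_measurable: "dens \<in> borel_measurable lam"
    and dens_nonneg: "\<And>x. x \<in> space lam \<Longrightarrow> 0 \<le> dens x"
    and dens_integrable: "integrable lam dens"
    and dens_bounded: "bdd_above (dens ` space lam)"
    and strata_sets: "\<And>i. {x \<in> space lam. I x = i} \<in> sets lam"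
    and theta_star_pos: "\<And>i. 0 < theta_star lam dens I $ i"
    and rho_pos: "\<And>t. 0 < t \<Longrightarrow> t < 1 \<Longrightarrow> 0 < rho t"
    and rho_bounded: "bdd_above (rho ` {0<..<1})"
begin

abbreviation "tstar \<equiv> theta_star lam dens I"
abbreviation "Z \<equiv> Zrho lam dens I rho"
abbreviation "\<pi> \<equiv> pi_rho lam dens I rho"

definition "rho_max = (SUP t\<in>{0<..<1}. rho t)"

definition "K = max 1 ((SUP x\<in>space lam. dens x) / Min (range (\<lambda>i. tstar $ i)))"

sublocale mh_kernel lam q c K
  by unfold_locales (simp add: K_def)

lemma rho_Theta: "\<theta> \<in> Theta \<Longrightarrow> 0 < rho (\<theta>$i) \<and> rho (\<theta>$i) \<le> rho_max"
  using Theta_component[of \<theta> i] rho_pos rho_bounded unfolding rho_max_def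
  by (auto intro: cSUP_upper)

lemma rho_max_pos: "0 < rho_max"
proof -
  have "rho (1/2) \<le> rho_max" unfolding rho_max_def using rho_bounded by (intro cSUP_upper) auto
  then show ?thesis using rho_pos[of "1/2"] by simp
qed

lemma measurable_I [measurable]: "I \<in> measurable lam (count_space UNIV)"
  using strata_sets by (subst measurable_count_space_eq2_countable) (auto simp: vimage_def Int_def conj_commute)

lemma Zrho_ge: "\<theta> \<in> Theta \<Longrightarrow> tstar$j / rho (\<theta>$j) \<le> Z \<theta>"
  unfolding Zrho_def
  by (rule member_le_sum[of j UNIV "\<lambda>i. tstar$i / rho (\<theta>$i)"])
     (use theta_star_pos rho_Theta in \<open>auto intro: divide_nonneg_pos less_imp_le\<close>)

lemma Zrho_pos: "\<theta> \<in> Theta \<Longrightarrow> 0 < Z \<theta>"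
  using Zrho_ge[of \<theta> undefined] theta_star_pos[of undefined] rho_Theta[of \<theta> undefined]
  by (meson divide_pos_pos less_le_trans)

lemma pi_rho_eq: "\<pi> \<theta> x = dens x / (rho (\<theta> $ I x) * Z \<theta>)"
  unfolding pi_rho_def by simp

lemma pi_rho_nonneg: "\<theta> \<in> Theta \<Longrightarrow> x \<in> space lam \<Longrightarrow> 0 \<le> \<pi> \<theta> x"
  unfolding pi_rho_eq using dens_nonneg[of x] rho_Theta[of \<theta> "I x"] Zrho_pos[of \<theta>]
  by (intro divide_nonneg_pos mult_pos_pos) auto

lemma pi_rho_le_K:
  assumes \<theta>: "\<theta> \<in> Theta" and x: "x \<in> space lam"
  shows "\<pi> \<theta> x \<le> K"
proof -
  let ?j = "I x"
  have r: "0 < rho (\<theta>$?j)" using rho_Theta[OF \<theta>] by auto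
  have t: "0 < tstar$?j" using theta_star_pos by auto
  have "\<pi> \<theta> x \<le> dens x / (rho (\<theta>$?j) * (tstar$?j / rho (\<theta>$?j)))"
    unfolding pi_rho_eq using r t dens_nonneg[OF x] Zrho_ge[OF \<theta>] Zrho_pos[OF \<theta>]
    by (intro divide_left_mono mult_left_mono) auto
  also have "\<dots> = dens x / tstar$?j" using r by simp
  also have "\<dots> \<le> (SUP x\<in>space lam. dens x) / Min (range (\<lambda>i. tstar $ i))"
    using dens_bounded x dens_nonneg[OF x] theta_star_pos
    by (intro frac_le) (auto intro: cSUP_upper2)
  also have "\<dots> \<le> K" unfolding K_def by simp
  finally show ?thesis .
qed

lemma measurable_pi_rho [measurable]: "\<pi> \<theta> \<in> borel_measurable lam"
proof -
  have "(\<lambda>x. rho (\<theta> $ I x)) \<in> borel_measurable lam" by measurable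
  then show ?thesis unfolding pi_rho_def[abs_def] using dens_measurable by measurable
qed

lemma pi_rho_integral:
  assumes \<theta>: "\<theta> \<in> Theta"
  shows "integrable lam (\<pi> \<theta>)" and "(\<integral>x. \<pi> \<theta> x \<partial>lam) = 1"
proof -
  define g where "g x = (\<Sum>i\<in>UNIV. (1 / (rho (\<theta>$i) * Z \<theta>)) * (dens x * indicator {x \<in> space lam. I x = i} x))" for x
  have strata: "integrable lam (\<lambda>x. dens x * indicator {x \<in> space lam. I x = i} x)" for i
    using strata_sets dens_integrable by (intro integrable_real_mult_indicator) auto
  have eq: "\<pi> \<theta> x = g x" if "x \<in> space lam" for x
  proof -
    have "g x = (\<Sum>i\<in>UNIV. if I x = i then (1 / (rho (\<theta>$i) * Z \<theta>)) * dens x else 0)"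
      unfolding g_def using that by (intro sum.cong) (auto simp: indicator_def)
    then show ?thesis unfolding pi_rho_eq by simp
  qed
  have "integrable lam g" unfolding g_def using strata by auto
  then show "integrable lam (\<pi> \<theta>)" using eq by (subst Bochner_Integration.integrable_cong) auto
  have "(\<integral>x. \<pi> \<theta> x \<partial>lam) = (\<integral>x. g x \<partial>lam)" using eq by (intro Bochner_Integration.integral_cong) auto
  also have "\<dots> = (\<Sum>i\<in>UNIV. tstar$i / rho (\<theta>$i)) / Z \<theta>"
    unfolding g_def using strata by (simp add: integral_sum theta_star_def sum_divide_distrib)
  also have "\<dots> = 1" using Zrho_pos[OF \<theta>] unfolding Zrho_def by simp
  finally show "(\<integral>x. \<pi> \<theta> x \<partial>lam) = 1" .
qed

lemma target_density_pi_rho: "\<theta> \<in> Theta \<Longrightarrow> target_density (\<pi> \<theta>)"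
  unfolding target_density_def using pi_rho_nonneg pi_rho_le_K pi_rho_integral by auto

lemma measurable_Hfield [measurable]: "(\<lambda>x. Hfield rho I x \<theta>) \<in> borel_measurable lam"
proof -
  have "(\<lambda>x. (\<lambda>j. \<chi> i. rho (\<theta>$i) * (if j = i then 1 else 0) - \<theta>$i * rho (\<theta>$j)) (I x)) \<in> borel_measurable lam"
    by (rule measurable_compose[OF measurable_I]) simp
  then show ?thesis unfolding Hfield_def by simp
qed

lemma bounded_by_Hfield:
  assumes \<theta>: "\<theta> \<in> Theta"
  shows "bounded_by (\<lambda>x. Hfield rho I x \<theta>) (sqrt 2 * rho_max)"
proof -
  have "norm (Hfield rho I x \<theta>) \<le> sqrt 2 * rho_max" for x
    using rho_Theta[OF \<theta>] by (intro norm_Hfield_le[OF \<theta>]) (auto simp: less_imp_le)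
  then show ?thesis unfolding bounded_by_def by simp
qed

abbreviation poisson_rhs :: "real^'d \<Rightarrow> 'a \<Rightarrow> real^'d" where
  "poisson_rhs \<theta> x \<equiv> Hfield rho I x \<theta> - hmean lam dens I rho \<theta>"

lemma hmean_eq: "hmean lam dens I rho \<theta> = expect (\<pi> \<theta>) (\<lambda>x. Hfield rho I x \<theta>)"
  unfolding hmean_def ..

lemma bounded_by_poisson_rhs:
  assumes \<theta>: "\<theta> \<in> Theta"
  shows "bounded_by (poisson_rhs \<theta>) (2 * sqrt 2 * rho_max)"
proof -
  have "bounded_by (\<lambda>_. hmean lam dens I rho \<theta>) (sqrt 2 * rho_max)"
    unfolding bounded_by_def hmean_eq
    using norm_expect_le[OF target_density_pi_rho[OF \<theta>] bounded_by_Hfield[OF \<theta>]] by simp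
  from bounded_by_diff[OF bounded_by_Hfield[OF \<theta>] this] show ?thesis by (simp add: mult_ac)
qed

lemma expect_poisson_rhs: "\<theta> \<in> Theta \<Longrightarrow> expect (\<pi> \<theta>) (poisson_rhs \<theta>) = 0"
  using integrable_target_scaleR[OF target_density_pi_rho bounded_by_Hfield]
    expect_const[OF target_density_pi_rho] target_densityD(2,3)[OF target_density_pi_rho]
  by (simp add: scaleR_diff_right hmean_eq)

definition "poisson_bound = 2 * sqrt 2 * rho_max / \<epsilon>"

lemma poisson_bound_nonneg: "0 \<le> poisson_bound"
  unfolding poisson_bound_def using rho_max_pos eps_pos by simp

definition poisson_solution :: "real^'d \<Rightarrow> 'a \<Rightarrow> real^'d" where
  "poisson_solution \<theta> = (SOME h. bounded_by h poisson_bound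
     \<and> (\<forall>x\<in>space lam. h x - mh (\<pi> \<theta>) h x = poisson_rhs \<theta> x) \<and> expect (\<pi> \<theta>) h = 0)"

lemma poisson_solution:
  assumes \<theta>: "\<theta> \<in> Theta"
  shows "bounded_by (poisson_solution \<theta>) poisson_bound"
    and "\<And>x. x \<in> space lam \<Longrightarrow> poisson_solution \<theta> x - mh (\<pi> \<theta>) (poisson_solution \<theta>) x = poisson_rhs \<theta> x"
    and "expect (\<pi> \<theta>) (poisson_solution \<theta>) = 0"
proof -
  have "\<exists>h. bounded_by h poisson_bound
     \<and> (\<forall>x\<in>space lam. h x - mh (\<pi> \<theta>) h x = poisson_rhs \<theta> x) \<and> expect (\<pi> \<theta>) h = 0"
    unfolding poisson_bound_def
    by (rule poisson_exists[OF target_density_pi_rho[OF \<theta>] bounded_by_poisson_rhs[OF \<theta>]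
        expect_poisson_rhs[OF \<theta>]])
  from someI_ex[OF this] show "bounded_by (poisson_solution \<theta>) poisson_bound"
    and "\<And>x. x \<in> space lam \<Longrightarrow> poisson_solution \<theta> x - mh (\<pi> \<theta>) (poisson_solution \<theta>) x = poisson_rhs \<theta> x"
    and "expect (\<pi> \<theta>) (poisson_solution \<theta>) = 0"
    unfolding poisson_solution_def[symmetric] by auto
qed

lemma solves_poisson_poisson_solution: "\<theta> \<in> Theta \<Longrightarrow> solves_poisson lam q dens I rho \<theta> (poisson_solution \<theta>)"
  unfolding solves_poisson_def using poisson_solution(2,3) by blast

lemma poisson_solution_unique:
  assumes \<theta>: "\<theta> \<in> Theta" and g: "g \<in> borel_measurable lam" "bounded (g ` space lam)"
    and solves: "solves_poisson lam q dens I rho \<theta> g"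
  shows "\<forall>x\<in>space lam. g x = poisson_solution \<theta> x"
proof -
  obtain S where "\<forall>x\<in>space lam. norm (g x) \<le> S" using g(2) unfolding bounded_iff by auto
  with g(1) have "bounded_by g S" unfolding bounded_by_def by auto
  then show ?thesis
  proof (rule poisson_unique[OF target_density_pi_rho[OF \<theta>] _ poisson_solution(1)[OF \<theta>]])
    show "\<forall>x\<in>space lam. g x - mh (\<pi> \<theta>) g x = poisson_rhs \<theta> x" and "expect (\<pi> \<theta>) g = 0"
      using solves unfolding solves_poisson_def by auto
    show "\<forall>x\<in>space lam. poisson_solution \<theta> x - mh (\<pi> \<theta>) (poisson_solution \<theta>) x = poisson_rhs \<theta> x"
      using poisson_solution(2)[OF \<theta>] by blast
  qed (rule poisson_solution(3)[OF \<theta>])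
qed

lemma rho_mult_Zrho_eq: "rho (\<theta>$j) * Z \<theta> = (\<Sum>i\<in>UNIV. tstar$i * (rho (\<theta>$j) / rho (\<theta>$i)))"
  unfolding Zrho_def by (simp add: sum_distrib_left mult_ac)

lemma abs_rho_mult_Zrho_diff_le:
  assumes \<theta>: "\<theta> \<in> Theta" and \<theta>': "\<theta>' \<in> Theta" and s: "rho_ratio_dev rho \<theta> \<theta>' \<le> 1/4"
  shows "\<bar>rho (\<theta>'$j) * Z \<theta>' - rho (\<theta>$j) * Z \<theta>\<bar> \<le> 3 * rho_ratio_dev rho \<theta> \<theta>' * (rho (\<theta>$j) * Z \<theta>)"
proof -
  let ?s = "rho_ratio_dev rho \<theta> \<theta>'" and ?r = "\<lambda>k. rho (\<theta>'$k) / rho (\<theta>$k)"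
  have summand: "\<bar>tstar$i * (rho (\<theta>'$j) / rho (\<theta>'$i)) - tstar$i * (rho (\<theta>$j) / rho (\<theta>$i))\<bar>
      \<le> 3 * ?s * (tstar$i * (rho (\<theta>$j) / rho (\<theta>$i)))" for i
  proof -
    have pos: "0 < rho (\<theta>$i)" "0 < rho (\<theta>$j)" "0 < rho (\<theta>'$i)" "0 < rho (\<theta>'$j)" "0 < tstar$i"
      using rho_Theta[OF \<theta>] rho_Theta[OF \<theta>'] theta_star_pos by auto
    have "tstar$i * (rho (\<theta>'$j) / rho (\<theta>'$i)) - tstar$i * (rho (\<theta>$j) / rho (\<theta>$i))
        = (tstar$i * (rho (\<theta>$j) / rho (\<theta>$i))) * (?r j / ?r i - 1)"
      using pos by (simp add: field_simps)
    then have "\<bar>tstar$i * (rho (\<theta>'$j) / rho (\<theta>'$i)) - tstar$i * (rho (\<theta>$j) / rho (\<theta>$i))\<bar>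
        = (tstar$i * (rho (\<theta>$j) / rho (\<theta>$i))) * \<bar>1 - ?r j / ?r i\<bar>"
      using pos by (simp add: abs_mult abs_minus_commute)
    also have "\<dots> \<le> (tstar$i * (rho (\<theta>$j) / rho (\<theta>$i))) * (3 * ?s)"
      using abs_one_minus_divide_le[OF abs_one_minus_rho_ratio_le abs_one_minus_rho_ratio_le s] pos
      by (intro mult_left_mono) auto
    finally show ?thesis by (simp add: mult_ac)
  qed
  have "\<bar>rho (\<theta>'$j) * Z \<theta>' - rho (\<theta>$j) * Z \<theta>\<bar>
      = \<bar>\<Sum>i\<in>UNIV. tstar$i * (rho (\<theta>'$j) / rho (\<theta>'$i)) - tstar$i * (rho (\<theta>$j) / rho (\<theta>$i))\<bar>"
    unfolding rho_mult_Zrho_eq by (simp add: sum_subtractf)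
  also have "\<dots> \<le> (\<Sum>i\<in>UNIV. 3 * ?s * (tstar$i * (rho (\<theta>$j) / rho (\<theta>$i))))"
    by (rule order_trans[OF sum_abs sum_mono[OF summand]])
  also have "\<dots> = 3 * ?s * (rho (\<theta>$j) * Z \<theta>)" unfolding rho_mult_Zrho_eq by (simp add: sum_distrib_left)
  finally show ?thesis .
qed

lemma abs_pi_rho_diff_le:
  assumes \<theta>: "\<theta> \<in> Theta" and \<theta>': "\<theta>' \<in> Theta" and s: "rho_ratio_dev rho \<theta> \<theta>' \<le> 1/4"
    and x: "x \<in> space lam"
  shows "\<bar>\<pi> \<theta> x - \<pi> \<theta>' x\<bar> \<le> 12 * K * rho_ratio_dev rho \<theta> \<theta>'"
proof -
  let ?s = "rho_ratio_dev rho \<theta> \<theta>'"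
  define a where "a = rho (\<theta>$I x) * Z \<theta>"
  define b where "b = rho (\<theta>'$I x) * Z \<theta>'"
  have a: "0 < a" unfolding a_def using rho_Theta[OF \<theta>] Zrho_pos[OF \<theta>] by auto
  have b: "0 < b" unfolding b_def using rho_Theta[OF \<theta>'] Zrho_pos[OF \<theta>'] by auto
  have s0: "0 \<le> ?s" by (rule rho_ratio_dev_nonneg)
  have ab: "\<bar>b - a\<bar> \<le> 3 * ?s * a"
    unfolding a_def b_def by (rule abs_rho_mult_Zrho_diff_le[OF \<theta> \<theta>' s])
  moreover have "?s * a \<le> 1/4 * a" using s a by (intro mult_right_mono) auto
  ultimately have "a / 4 \<le> b" by (auto simp: abs_le_iff)
  have d: "0 \<le> dens x" by (rule dens_nonneg[OF x])
  have "\<pi> \<theta> x - \<pi> \<theta>' x = dens x * (b - a) / (a * b)"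
    unfolding pi_rho_eq a_def[symmetric] b_def[symmetric] using a b by (simp add: field_simps)
  then have "\<bar>\<pi> \<theta> x - \<pi> \<theta>' x\<bar> = dens x * \<bar>b - a\<bar> / (a * b)"
    using a b d by (simp add: abs_mult abs_div_pos)
  also have "\<dots> \<le> dens x * (3 * ?s * a) / (a * (a / 4))"
    using ab a b d s0 \<open>a / 4 \<le> b\<close> by (intro frac_le mult_left_mono mult_mono) auto
  also have "\<dots> = 12 * ?s * \<pi> \<theta> x" unfolding pi_rho_eq a_def[symmetric] using a by (simp add: field_simps)
  also have "\<dots> \<le> 12 * ?s * K" using pi_rho_le_K[OF \<theta> x] s0 by (intro mult_left_mono) auto
  finally show ?thesis by (simp add: mult_ac)
qed

lemma abs_mh_accept_pi_rho_diff_le: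
  assumes \<theta>: "\<theta> \<in> Theta" and \<theta>': "\<theta>' \<in> Theta" and s: "rho_ratio_dev rho \<theta> \<theta>' \<le> 1/4"
    and x: "x \<in> space lam" and y: "y \<in> space lam"
  shows "\<bar>mh_accept (\<pi> \<theta>) x y - mh_accept (\<pi> \<theta>') x y\<bar> \<le> 3 * rho_ratio_dev rho \<theta> \<theta>'"
proof (cases "0 < dens x")
  case False
  then have "dens x = 0" using dens_nonneg[OF x] by simp
  then have "\<not> 0 < \<pi> \<theta> x" "\<not> 0 < \<pi> \<theta>' x" unfolding pi_rho_eq by auto
  then show ?thesis unfolding mh_accept_def using rho_ratio_dev_nonneg by simp
next
  case True
  let ?r = "\<lambda>k. rho (\<theta>'$k) / rho (\<theta>$k)"
  have pos: "0 < rho (\<theta>$I x)" "0 < rho (\<theta>$I y)" "0 < rho (\<theta>'$I x)" "0 < rho (\<theta>'$I y)"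
    "0 < Z \<theta>" "0 < Z \<theta>'"
    using rho_Theta[OF \<theta>] rho_Theta[OF \<theta>'] Zrho_pos[OF \<theta>] Zrho_pos[OF \<theta>'] by auto
  have px: "0 < \<pi> \<theta> x" "0 < \<pi> \<theta>' x" unfolding pi_rho_eq using True pos by auto
  define u where "u = \<pi> \<theta> y / \<pi> \<theta> x"
  have u: "0 \<le> u" unfolding u_def pi_rho_eq using dens_nonneg[OF y] True pos by auto
  have "\<pi> \<theta>' y / \<pi> \<theta>' x = u * (?r (I x) / ?r (I y))"
    unfolding u_def pi_rho_eq using pos True by (simp add: field_simps)
  then have "\<bar>mh_accept (\<pi> \<theta>) x y - mh_accept (\<pi> \<theta>') x y\<bar> = \<bar>min 1 u - min 1 (u * (?r (I x) / ?r (I y)))\<bar>"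
    unfolding mh_accept_def using px u_def by simp
  also have "\<dots> \<le> \<bar>1 - ?r (I x) / ?r (I y)\<bar>" using pos by (intro abs_min_one_diff_le[OF u]) auto
  also have "\<dots> \<le> 3 * rho_ratio_dev rho \<theta> \<theta>'"
    by (rule abs_one_minus_divide_le[OF abs_one_minus_rho_ratio_le abs_one_minus_rho_ratio_le s])
  finally show ?thesis .
qed

lemma poisson_rhs_lipschitz:
  obtains C where "0 \<le> C"
    and "\<And>\<theta> \<theta>' x. \<theta> \<in> Theta \<Longrightarrow> \<theta>' \<in> Theta \<Longrightarrow> rho_ratio_dev rho \<theta> \<theta>' \<le> 1/4 \<Longrightarrow> x \<in> space lam \<Longrightarrow>
      norm (poisson_rhs \<theta> x - poisson_rhs \<theta>' x) \<le> C * (norm (\<theta> - \<theta>') + rho_ratio_dev rho \<theta> \<theta>')"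
proof -
  define CH where "CH = real CARD('d) * (2 * rho_max)"
  define C where "C = 2 * CH + 12 * K * (sqrt 2 * rho_max) * measure lam (space lam)"
  show ?thesis
  proof
    show "0 \<le> C" unfolding C_def CH_def using rho_max_pos K_pos by simp
    fix \<theta> \<theta>' :: "real^'d" and x
    assume \<theta>: "\<theta> \<in> Theta" and \<theta>': "\<theta>' \<in> Theta" and s: "rho_ratio_dev rho \<theta> \<theta>' \<le> 1/4"
      and x: "x \<in> space lam"
    define E where "E = norm (\<theta> - \<theta>') + rho_ratio_dev rho \<theta> \<theta>'"
    have E: "rho_ratio_dev rho \<theta> \<theta>' \<le> E" unfolding E_def by simp
    have H_diff: "bounded_by (\<lambda>y. Hfield rho I y \<theta> - Hfield rho I y \<theta>') (CH * E)"
      unfolding bounded_by_def CH_def E_def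
      using norm_Hfield_diff_le[OF \<theta> \<theta>', of rho rho_max] rho_Theta[OF \<theta>] by (auto simp: mult_ac)
    have "hmean lam dens I rho \<theta> - hmean lam dens I rho \<theta>'
        = (expect (\<pi> \<theta>) (\<lambda>y. Hfield rho I y \<theta>) - expect (\<pi> \<theta>') (\<lambda>y. Hfield rho I y \<theta>))
          + expect (\<pi> \<theta>') (\<lambda>y. Hfield rho I y \<theta> - Hfield rho I y \<theta>')"
      unfolding hmean_eq
      using integrable_target_scaleR[OF target_density_pi_rho[OF \<theta>'] bounded_by_Hfield[OF \<theta>]]
        integrable_target_scaleR[OF target_density_pi_rho[OF \<theta>'] bounded_by_Hfield[OF \<theta>']]
      by (simp add: scaleR_diff_right)
    also have "norm \<dots> \<le> 12 * K * E * (sqrt 2 * rho_max) * measure lam (space lam) + CH * E"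
    proof (rule norm_triangle_le, rule add_mono)
      have "\<bar>\<pi> \<theta> y - \<pi> \<theta>' y\<bar> \<le> 12 * K * E" if "y \<in> space lam" for y
        using abs_pi_rho_diff_le[OF \<theta> \<theta>' s that] E K_pos by (meson mult_left_mono order_trans less_imp_le
            mult_pos_pos zero_less_numeral)
      then show "norm (expect (\<pi> \<theta>) (\<lambda>y. Hfield rho I y \<theta>) - expect (\<pi> \<theta>') (\<lambda>y. Hfield rho I y \<theta>))
          \<le> 12 * K * E * (sqrt 2 * rho_max) * measure lam (space lam)"
        by (rule norm_expect_target_diff_le[OF target_density_pi_rho[OF \<theta>] target_density_pi_rho[OF \<theta>']
              bounded_by_Hfield[OF \<theta>]])
      show "norm (expect (\<pi> \<theta>') (\<lambda>y. Hfield rho I y \<theta> - Hfield rho I y \<theta>')) \<le> CH * E"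
        by (rule norm_expect_le[OF target_density_pi_rho[OF \<theta>'] H_diff])
    qed
    finally have "norm (hmean lam dens I rho \<theta> - hmean lam dens I rho \<theta>')
        \<le> 12 * K * E * (sqrt 2 * rho_max) * measure lam (space lam) + CH * E" .
    then have "norm (poisson_rhs \<theta> x - poisson_rhs \<theta>' x)
        \<le> CH * E + (12 * K * E * (sqrt 2 * rho_max) * measure lam (space lam) + CH * E)"
      using bounded_byD(2)[OF H_diff x]
        norm_triangle_ineq4[of "Hfield rho I x \<theta> - Hfield rho I x \<theta>'"
          "hmean lam dens I rho \<theta> - hmean lam dens I rho \<theta>'"]
      by (simp add: algebra_simps)
    then show "norm (poisson_rhs \<theta> x - poisson_rhs \<theta>' x) \<le> C * E"
      unfolding C_def by (simp add: algebra_simps)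
  qed
qed

text \<open>The difference \<open>u\<close> of two Poisson solutions solves a Poisson equation for the kernel of
  \<open>\<theta>\<close> whose right-hand side collects the perturbations of the right-hand side, of the target and
  of the acceptance probabilities; the contraction then bounds \<open>u\<close> by that source over \<open>\<epsilon>\<close>.\<close>
lemma norm_poisson_solution_diff_le:
  assumes \<theta>: "\<theta> \<in> Theta" and \<theta>': "\<theta>' \<in> Theta" and s: "rho_ratio_dev rho \<theta> \<theta>' \<le> 1/4"
    and D: "\<And>z. z \<in> space lam \<Longrightarrow> norm (poisson_rhs \<theta> z - poisson_rhs \<theta>' z) \<le> D"
    and x: "x \<in> space lam"
  shows "norm (poisson_solution \<theta> x - poisson_solution \<theta>' x)
    \<le> (D + \<epsilon> * (12 * K * rho_ratio_dev rho \<theta> \<theta>' * poisson_bound * measure lam (space lam))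
        + 6 * rho_ratio_dev rho \<theta> \<theta>' * poisson_bound) / \<epsilon>"
proof -
  let ?s = "rho_ratio_dev rho \<theta> \<theta>'" and ?H = "poisson_solution \<theta>" and ?H' = "poisson_solution \<theta>'"
  have p: "target_density (\<pi> \<theta>)" and p': "target_density (\<pi> \<theta>')"
    using target_density_pi_rho \<theta> \<theta>' by auto
  have H: "bounded_by ?H poisson_bound" and H': "bounded_by ?H' poisson_bound"
    using poisson_solution(1) \<theta> \<theta>' by auto
  define u where "u = (\<lambda>z. ?H z - ?H' z)"
  define e where "e = expect (\<pi> \<theta>) u"
  have u: "bounded_by u (poisson_bound + poisson_bound)" unfolding u_def by (rule bounded_by_diff[OF H H'])
  have "e = expect (\<pi> \<theta>') ?H' - expect (\<pi> \<theta>) ?H'"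
    unfolding e_def u_def using integrable_target_scaleR[OF p H] integrable_target_scaleR[OF p H']
      poisson_solution(3)[OF \<theta>] poisson_solution(3)[OF \<theta>'] by (simp add: scaleR_diff_right)
  also have "norm \<dots> \<le> 12 * K * ?s * poisson_bound * measure lam (space lam)"
    using norm_expect_target_diff_le[OF p' p H', of "12 * K * ?s"] abs_pi_rho_diff_le[OF \<theta> \<theta>' s]
    by (simp add: abs_minus_commute)
  finally have "norm (\<epsilon> *\<^sub>R e) \<le> \<epsilon> * (12 * K * ?s * poisson_bound * measure lam (space lam))"
    using eps_pos by (simp add: mult_left_mono)
  then have "\<forall>z\<in>space lam. norm (u z) \<le> (D + \<epsilon> * (12 * K * ?s * poisson_bound * measure lam (space lam))
      + 6 * ?s * poisson_bound) / (1 - (1 - \<epsilon>))"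
  proof (intro norm_le_of_self_improving_bound[OF space_nonempty])
    show "\<forall>z\<in>space lam. norm (u z) \<le> poisson_bound + poisson_bound" using bounded_byD(2)[OF u] by auto
    fix S z assume "\<forall>y\<in>space lam. norm (u y) \<le> S" and z: "z \<in> space lam"
    then have uS: "bounded_by u S" using bounded_byD(1)[OF u] unfolding bounded_by_def by auto
    have Pu: "mh (\<pi> \<theta>) u z = mh (\<pi> \<theta>) ?H z - mh (\<pi> \<theta>) ?H' z"
      unfolding u_def by (rule mh_apply_diff[OF p H H' z])
    have "u z = ?H z - ?H' z" by (simp add: u_def)
    also have "\<dots> = (?H z - mh (\<pi> \<theta>) ?H z) - (?H' z - mh (\<pi> \<theta>') ?H' z)
        + (mh (\<pi> \<theta>) u z - \<epsilon> *\<^sub>R e) + \<epsilon> *\<^sub>R e + (mh (\<pi> \<theta>) ?H' z - mh (\<pi> \<theta>') ?H' z)"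
      unfolding Pu by (simp add: algebra_simps)
    also have "\<dots> = (poisson_rhs \<theta> z - poisson_rhs \<theta>' z)
        + (mh (\<pi> \<theta>) u z - \<epsilon> *\<^sub>R e) + \<epsilon> *\<^sub>R e + (mh (\<pi> \<theta>) ?H' z - mh (\<pi> \<theta>') ?H' z)"
      unfolding poisson_solution(2)[OF \<theta> z] poisson_solution(2)[OF \<theta>' z] ..
    finally have "norm (u z) \<le> norm (poisson_rhs \<theta> z - poisson_rhs \<theta>' z)
        + norm (mh (\<pi> \<theta>) u z - \<epsilon> *\<^sub>R e) + norm (\<epsilon> *\<^sub>R e) + norm (mh (\<pi> \<theta>) ?H' z - mh (\<pi> \<theta>') ?H' z)"
      by (simp only: norm_add4_le)
    moreover have "norm (mh (\<pi> \<theta>) ?H' z - mh (\<pi> \<theta>') ?H' z) \<le> 2 * (3 * ?s) * poisson_bound"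
      by (rule norm_mh_apply_target_diff_le[OF p p' H' z abs_mh_accept_pi_rho_diff_le[OF \<theta> \<theta>' s z]])
    moreover have "norm (mh (\<pi> \<theta>) u z - \<epsilon> *\<^sub>R e) \<le> (1 - \<epsilon>) * S"
      unfolding e_def by (rule norm_mh_apply_minus_expect_le[OF p uS z])
    ultimately show "norm (u z) \<le> (D + \<epsilon> * (12 * K * ?s * poisson_bound * measure lam (space lam))
        + 6 * ?s * poisson_bound) + (1 - \<epsilon>) * S"
      using D[OF z] \<open>norm (\<epsilon> *\<^sub>R e) \<le> _\<close> by linarith
  qed (use eps_pos in auto)
  then show ?thesis using x unfolding u_def by simp
qed

lemma poisson_solution_lipschitz_local:
  obtains C where "0 \<le> C"
    and "\<And>\<theta> \<theta>' x. \<theta> \<in> Theta \<Longrightarrow> \<theta>' \<in> Theta \<Longrightarrow> rho_ratio_dev rho \<theta> \<theta>' \<le> 1/4 \<Longrightarrow> x \<in> space lam \<Longrightarrow>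
      norm (poisson_solution \<theta> x - poisson_solution \<theta>' x)
      + norm (mh (\<pi> \<theta>) (poisson_solution \<theta>) x - mh (\<pi> \<theta>') (poisson_solution \<theta>') x)
      \<le> C * (norm (\<theta> - \<theta>') + rho_ratio_dev rho \<theta> \<theta>')"
proof -
  obtain Cf where Cf: "0 \<le> Cf"
    and rhs: "\<And>\<theta> \<theta>' x. \<theta> \<in> Theta \<Longrightarrow> \<theta>' \<in> Theta \<Longrightarrow> rho_ratio_dev rho \<theta> \<theta>' \<le> 1/4 \<Longrightarrow> x \<in> space lam \<Longrightarrow>
      norm (poisson_rhs \<theta> x - poisson_rhs \<theta>' x) \<le> Cf * (norm (\<theta> - \<theta>') + rho_ratio_dev rho \<theta> \<theta>')"
    using poisson_rhs_lipschitz by blast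
  define A where "A = Cf + \<epsilon> * (12 * K * poisson_bound * measure lam (space lam)) + 6 * poisson_bound"
  define B where "B = A / \<epsilon>"
  have B: "0 \<le> B" unfolding B_def A_def using Cf eps_pos K_pos poisson_bound_nonneg by simp
  show ?thesis
  proof
    show "0 \<le> 2 * B + Cf" using B Cf by simp
    fix \<theta> \<theta>' :: "real^'d" and x
    assume \<theta>: "\<theta> \<in> Theta" and \<theta>': "\<theta>' \<in> Theta" and s: "rho_ratio_dev rho \<theta> \<theta>' \<le> 1/4"
      and x: "x \<in> space lam"
    let ?s = "rho_ratio_dev rho \<theta> \<theta>'"
    define E where "E = norm (\<theta> - \<theta>') + ?s"
    have sE: "?s \<le> E" unfolding E_def by simp
    have "norm (poisson_solution \<theta> x - poisson_solution \<theta>' x)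
        \<le> (Cf * E + \<epsilon> * (12 * K * ?s * poisson_bound * measure lam (space lam)) + 6 * ?s * poisson_bound) / \<epsilon>"
      using rhs[OF \<theta> \<theta>' s] unfolding E_def[symmetric] by (rule norm_poisson_solution_diff_le[OF \<theta> \<theta>' s _ x])
    also have "\<dots> \<le> A * E / \<epsilon>"
    proof (rule divide_right_mono)
      have "\<epsilon> * (12 * K * ?s * poisson_bound * measure lam (space lam)) + 6 * ?s * poisson_bound
          = ?s * (\<epsilon> * (12 * K * poisson_bound * measure lam (space lam)) + 6 * poisson_bound)"
        by (simp add: algebra_simps)
      also have "\<dots> \<le> E * (\<epsilon> * (12 * K * poisson_bound * measure lam (space lam)) + 6 * poisson_bound)"
        using sE eps_pos K_pos poisson_bound_nonneg by (intro mult_right_mono) auto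
      finally show "Cf * E + \<epsilon> * (12 * K * ?s * poisson_bound * measure lam (space lam)) + 6 * ?s * poisson_bound
          \<le> A * E" unfolding A_def by (simp add: algebra_simps)
    qed (use eps_pos in simp)
    also have "\<dots> = B * E" unfolding B_def by simp
    finally have u: "norm (poisson_solution \<theta> x - poisson_solution \<theta>' x) \<le> B * E" .
    have "mh (\<pi> \<theta>) (poisson_solution \<theta>) x - mh (\<pi> \<theta>') (poisson_solution \<theta>') x
        = (poisson_solution \<theta> x - poisson_solution \<theta>' x) - (poisson_rhs \<theta> x - poisson_rhs \<theta>' x)"
      using poisson_solution(2)[OF \<theta> x] poisson_solution(2)[OF \<theta>' x] by (simp add: algebra_simps)
    then have "norm (mh (\<pi> \<theta>) (poisson_solution \<theta>) x - mh (\<pi> \<theta>') (poisson_solution \<theta>') x)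
        \<le> norm (poisson_solution \<theta> x - poisson_solution \<theta>' x) + norm (poisson_rhs \<theta> x - poisson_rhs \<theta>' x)"
      by (metis norm_triangle_ineq4)
    then show "norm (poisson_solution \<theta> x - poisson_solution \<theta>' x)
        + norm (mh (\<pi> \<theta>) (poisson_solution \<theta>) x - mh (\<pi> \<theta>') (poisson_solution \<theta>') x)
        \<le> (2 * B + Cf) * E"
      using u rhs[OF \<theta> \<theta>' s x] unfolding E_def[symmetric] distrib_right by linarith
  qed
qed

text \<open>Far from the diagonal (\<open>rho_ratio_dev rho \<theta> \<theta>' > 1/4\<close>) the uniform bound on the solutions
  suffices.\<close>
lemma poisson_solution_lipschitz:
  obtains C where "\<And>\<theta> \<theta>' x. \<theta> \<in> Theta \<Longrightarrow> \<theta>' \<in> Theta \<Longrightarrow> x \<in> space lam \<Longrightarrow>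
      norm (poisson_solution \<theta> x - poisson_solution \<theta>' x)
      + norm (mh (\<pi> \<theta>) (poisson_solution \<theta>) x - mh (\<pi> \<theta>') (poisson_solution \<theta>') x)
      \<le> C * (norm (\<theta> - \<theta>') + rho_ratio_dev rho \<theta> \<theta>')"
proof -
  obtain C where C: "0 \<le> C"
    and local: "\<And>\<theta> \<theta>' x. \<theta> \<in> Theta \<Longrightarrow> \<theta>' \<in> Theta \<Longrightarrow> rho_ratio_dev rho \<theta> \<theta>' \<le> 1/4 \<Longrightarrow> x \<in> space lam \<Longrightarrow>
      norm (poisson_solution \<theta> x - poisson_solution \<theta>' x)
      + norm (mh (\<pi> \<theta>) (poisson_solution \<theta>) x - mh (\<pi> \<theta>') (poisson_solution \<theta>') x)
      \<le> C * (norm (\<theta> - \<theta>') + rho_ratio_dev rho \<theta> \<theta>')"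
    using poisson_solution_lipschitz_local by blast
  show ?thesis
  proof
    fix \<theta> \<theta>' :: "real^'d" and x
    assume \<theta>: "\<theta> \<in> Theta" and \<theta>': "\<theta>' \<in> Theta" and x: "x \<in> space lam"
    define E where "E = norm (\<theta> - \<theta>') + rho_ratio_dev rho \<theta> \<theta>'"
    have E: "0 \<le> E" unfolding E_def using rho_ratio_dev_nonneg[of rho \<theta> \<theta>'] by simp
    have CE: "0 \<le> C * E" and BE: "0 \<le> 16 * poisson_bound * E" using C E poisson_bound_nonneg by simp_all
    show "norm (poisson_solution \<theta> x - poisson_solution \<theta>' x)
      + norm (mh (\<pi> \<theta>) (poisson_solution \<theta>) x - mh (\<pi> \<theta>') (poisson_solution \<theta>') x)
      \<le> (C + 16 * poisson_bound) * E"
    proof (cases "rho_ratio_dev rho \<theta> \<theta>' \<le> 1/4")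
      case True
      then show ?thesis using local[OF \<theta> \<theta>' True x] BE unfolding E_def[symmetric] distrib_right by linarith
    next
      case False
      then have "1/4 \<le> E" unfolding E_def using norm_ge_zero[of "\<theta> - \<theta>'"] by linarith
      then have "16 * poisson_bound * (1/4) \<le> 16 * poisson_bound * E"
        using poisson_bound_nonneg by (intro mult_left_mono) auto
      moreover have H: "bounded_by (poisson_solution \<theta>) poisson_bound" "bounded_by (poisson_solution \<theta>') poisson_bound"
        using poisson_solution(1) \<theta> \<theta>' by auto
      moreover have "norm (mh (\<pi> \<theta>) (poisson_solution \<theta>) x) \<le> poisson_bound"
        "norm (mh (\<pi> \<theta>') (poisson_solution \<theta>') x) \<le> poisson_bound"
        using norm_mh_apply_le[OF target_density_pi_rho[OF \<theta>] H(1) x]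
          norm_mh_apply_le[OF target_density_pi_rho[OF \<theta>'] H(2) x] by auto
      ultimately show ?thesis
        using bounded_byD(2)[OF H(1) x] bounded_byD(2)[OF H(2) x] CE
          norm_triangle_ineq4[of "poisson_solution \<theta> x" "poisson_solution \<theta>' x"]
          norm_triangle_ineq4[of "mh (\<pi> \<theta>) (poisson_solution \<theta>) x" "mh (\<pi> \<theta>') (poisson_solution \<theta>') x"]
        unfolding distrib_right by linarith
    qed
  qed
qed

end

theorem lemma6p4:
  fixes X :: "(real^'D) set"
    and lam :: "(real^'D) measure"
    and dens :: "real^'D \<Rightarrow> real"
    and I :: "real^'D \<Rightarrow> 'd::finite"
    and rho :: "real \<Rightarrow> real"
    and q :: "real^'D \<Rightarrow> real^'D \<Rightarrow> real"
  assumes X_meas: "X \<in> sets borel"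
    and lam_space: "space lam = X"
    and lam_sets: "sets lam = sets (restrict_space borel X)"
    and pi_meas: "dens \<in> borel_measurable lam"
    and pi_nonneg: "\<forall>x\<in>X. 0 \<le> dens x"
    and pi_int: "integrable lam dens"
    and pi_prob: "(\<integral>x. dens x \<partial>lam) = 1"
    and strata_meas: "\<forall>i. {x\<in>X. I x = i} \<in> sets lam"
    and rho_meas: "rho \<in> borel_measurable (restrict_space borel {0<..<1})"
    and rho_pos: "\<forall>t\<in>{0<..<1}. 0 < rho t"
    \<comment> \<open>A1\<close>
    and A1_bdd: "bdd_above (dens ` X)"
    and A1_strata: "\<forall>i. 0 < theta_star lam dens I $ i"
    \<comment> \<open>A2: symmetric proposal density bounded below\<close>
    and q_meas: "(\<lambda>(x, y). q x y) \<in> borel_measurable (lam \<Otimes>\<^sub>M lam)"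
    and q_nonneg: "\<forall>x\<in>X. \<forall>y\<in>X. 0 \<le> q x y"
    and q_density: "\<forall>x\<in>X. integrable lam (q x) \<and> (\<integral>y. q x y \<partial>lam) = 1"
    and q_sym: "\<forall>x\<in>X. \<forall>y\<in>X. q x y = q y x"
    and q_inf: "\<exists>c>0. \<forall>x\<in>X. \<forall>y\<in>X. c \<le> q x y"
    \<comment> \<open>R2\<close>
    and R2: "bdd_above (rho ` {0<..<1})"
  shows "(\<forall>\<theta>\<in>Theta. \<forall>x\<in>X. norm (Hfield rho I x \<theta>) \<le> sqrt 2 * (SUP t\<in>{0<..<1}. rho t))
     \<and> (\<exists>Hh :: real^'d \<Rightarrow> real^'D \<Rightarrow> real^'d.
          (\<forall>\<theta>\<in>Theta.
             Hh \<theta> \<in> borel_measurable lam \<and> bounded (Hh \<theta> ` X)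
             \<and> solves_poisson lam q dens I rho \<theta> (Hh \<theta>)
             \<and> (\<forall>g. g \<in> borel_measurable lam \<and> bounded (g ` X)
                    \<and> solves_poisson lam q dens I rho \<theta> g \<longrightarrow> (\<forall>x\<in>X. g x = Hh \<theta> x)))
        \<and> (\<exists>B. \<forall>\<theta>\<in>Theta. \<forall>x\<in>X. norm (Hh \<theta> x) \<le> B)
        \<and> (\<exists>C. \<forall>\<theta>\<in>Theta. \<forall>\<theta>'\<in>Theta. \<forall>x\<in>X.
              norm (Hh \<theta> x - Hh \<theta>' x)
              + norm (mh_apply lam q (pi_rho lam dens I rho \<theta>) (Hh \<theta>) x
                      - mh_apply lam q (pi_rho lam dens I rho \<theta>') (Hh \<theta>') x)
              \<le> C * (norm (\<theta> - \<theta>') + (\<Sum>i\<in>UNIV. \<bar>1 - rho (\<theta>'$i) / rho (\<theta>$i)\<bar>))))"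
proof -
  \<comment> \<open>The measurability of \<open>X\<close> and \<open>rho\<close> and the description of \<open>sets lam\<close> are not needed.\<close>
  obtain c where "0 < c" and "\<forall>x\<in>X. \<forall>y\<in>X. c \<le> q x y" using q_inf by blast
  moreover have "space lam \<noteq> {}" using pi_prob by (auto simp: Bochner_Integration.integral_empty)
  ultimately interpret stratified_mh lam q c dens I rho
    using assms by unfold_locales (auto simp: lam_space)
  obtain C where C: "\<And>\<theta> \<theta>' x. \<theta> \<in> Theta \<Longrightarrow> \<theta>' \<in> Theta \<Longrightarrow> x \<in> space lam \<Longrightarrow>
      norm (poisson_solution \<theta> x - poisson_solution \<theta>' x)
      + norm (mh (\<pi> \<theta>) (poisson_solution \<theta>) x - mh (\<pi> \<theta>') (poisson_solution \<theta>') x)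
      \<le> C * (norm (\<theta> - \<theta>') + rho_ratio_dev rho \<theta> \<theta>')"
    using poisson_solution_lipschitz by blast
  have "\<forall>\<theta>\<in>Theta. \<forall>x\<in>X. norm (Hfield rho I x \<theta>) \<le> sqrt 2 * (SUP t\<in>{0<..<1}. rho t)"
    using bounded_by_Hfield lam_space unfolding bounded_by_def rho_max_def by auto
  moreover have "\<forall>\<theta>\<in>Theta. poisson_solution \<theta> \<in> borel_measurable lam \<and> bounded (poisson_solution \<theta> ` X)
      \<and> solves_poisson lam q dens I rho \<theta> (poisson_solution \<theta>)
      \<and> (\<forall>g. g \<in> borel_measurable lam \<and> bounded (g ` X) \<and> solves_poisson lam q dens I rho \<theta> g
          \<longrightarrow> (\<forall>x\<in>X. g x = poisson_solution \<theta> x))"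
  proof (intro ballI conjI allI impI)
    fix \<theta> :: "real^'d" assume \<theta>: "\<theta> \<in> Theta"
    show "poisson_solution \<theta> \<in> borel_measurable lam" by (rule bounded_byD(1)[OF poisson_solution(1)[OF \<theta>]])
    show "bounded (poisson_solution \<theta> ` X)"
      using poisson_solution(1)[OF \<theta>] lam_space unfolding bounded_iff bounded_by_def by auto
    show "solves_poisson lam q dens I rho \<theta> (poisson_solution \<theta>)" by (rule solves_poisson_poisson_solution[OF \<theta>])
    fix g x assume "g \<in> borel_measurable lam \<and> bounded (g ` X) \<and> solves_poisson lam q dens I rho \<theta> g"
      and "x \<in> X"
    then show "g x = poisson_solution \<theta> x" using poisson_solution_unique[OF \<theta>] lam_space by auto
  qed
  moreover have "\<forall>\<theta>\<in>Theta. \<forall>x\<in>X. norm (poisson_solution \<theta> x) \<le> poisson_bound"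
    using poisson_solution(1) lam_space unfolding bounded_by_def by auto
  moreover have "\<forall>\<theta>\<in>Theta. \<forall>\<theta>'\<in>Theta. \<forall>x\<in>X.
      norm (poisson_solution \<theta> x - poisson_solution \<theta>' x)
      + norm (mh (\<pi> \<theta>) (poisson_solution \<theta>) x - mh (\<pi> \<theta>') (poisson_solution \<theta>') x)
      \<le> C * (norm (\<theta> - \<theta>') + (\<Sum>i\<in>UNIV. \<bar>1 - rho (\<theta>'$i) / rho (\<theta>$i)\<bar>))"
    using C lam_space unfolding rho_ratio_dev_def by simp
  ultimately show ?thesis by (intro conjI exI) assumption+
qed

end
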